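(* Let $d \in \mathbf{N}=\{1,2,\dots\}$. Then the following two statements hold. (i) For every $N \in \mathbf{N}$: a measure $\mu$ maximizes $E_\infty$ over $\mathcal{P}_N^{=}(\mathbf{S}^d)$ if and only if there exist an orthonormal basis $v_1,\dots,v_{d+1}$ of $\mathbf{R}^{d+1}$ and points $x_1,\dots,x_N \in \mathbf{S}^d$ such that $\mu = \frac{1}{N}\sum_{i=1}^N \delta_{x_i}$ and $x_i \in \{v_j,-v_j\}$ whenever $i \equiv j \pmod{d+1}$. (ii) A measure $\mu$ maximizes $E_\infty$ over $\mathcal{P}_{\mathrm{fin}}(\mathbf{S}^d)$ if and only if there exists an orthonormal basis $v_1,\dots,v_{d+1}$ of $\mathbf{R}^{d+1}$ such that $\mu = \sum_{i=1}^{d+1}(a_i\delta_{v_i} + b_i\delta_{-v_i})$ with $a_i,b_i \ge 0$ and $a_i+b_i = \frac{1}{d+1}$ for all $i=1,\dots,d+1$.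
   Context: $\mathbf{S}^d=\{x\in\mathbf{R}^{d+1}: |x|=1\}$. Define $\Lambda^\infty:\mathbf{S}^d\times\mathbf{S}^d\to\{0,1\}$ by $\Lambda^\infty(x,y)=1$ if $x\cdot y=0$ and $\Lambda^\infty(x,y)=0$ otherwise. For a finite nonnegative Borel measure $\mu$ on $\mathbf{S}^d$, $E_\infty(\mu)=\frac12\iint \Lambda^\infty(x,y)\,d\mu(x)\,d\mu(y)$. $\delta_x$ denotes the Dirac probability measure at $x$. $\mathcal{P}_N^{=}(\mathbf{S}^d)$ is the set of probability measures of the form $\frac1N\sum_{i=1}^N\delta_{x_i}$ with $x_i\in\mathbf{S}^d$ (not necessarily distinct). $\mathcal{P}_{\mathrm{fin}}(\mathbf{S}^d)$ is the set of Borel probability measures on $\mathbf{S}^d$ with finite support. *)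

theory Defs
  imports "HOL-Analysis.Analysis" "HOL-Probability.Probability"
begin

text \<open>Points of R^(d+1) are vectors of type real^'n with CARD('n) = d+1.
  Finitely supported probability measures on the sphere are represented as pmfs
  (discrete probability measures) whose (finite) support lies on the unit sphere.\<close>

definition Lambda_inf :: "real^'n \<Rightarrow> real^'n \<Rightarrow> real" where
  "Lambda_inf x y = (if x \<bullet> y = 0 then 1 else 0)"

definition E_inf :: "(real^'n) pmf \<Rightarrow> real" where
  "E_inf \<mu> = 1/2 * measure_pmf.expectation \<mu>
      (\<lambda>x. measure_pmf.expectation \<mu> (\<lambda>y. Lambda_inf x y))"

definition is_empirical :: "(real^'n) pmf \<Rightarrow> nat \<Rightarrow> (nat \<Rightarrow> real^'n) \<Rightarrow> bool" where
  "is_empirical \<mu> N x \<longleftrightarrow>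
     (\<forall>A. measure (measure_pmf \<mu>) A = (1 / real N) * (\<Sum>i<N. indicator A (x i)))"

definition P_N_eq :: "nat \<Rightarrow> (real^'n) pmf set" where
  "P_N_eq N = {\<mu>. \<exists>x. (\<forall>i<N. x i \<in> sphere 0 1) \<and> is_empirical \<mu> N x}"

definition P_fin :: "(real^'n) pmf set" where
  "P_fin = {\<mu>. finite (set_pmf \<mu>) \<and> set_pmf \<mu> \<subseteq> sphere 0 1}"

definition maximizes_on :: "('a \<Rightarrow> real) \<Rightarrow> 'a set \<Rightarrow> 'a \<Rightarrow> bool" where
  "maximizes_on E S \<mu> \<longleftrightarrow> \<mu> \<in> S \<and> (\<forall>\<nu>\<in>S. E \<nu> \<le> E \<mu>)"

text \<open>v 0, ..., v (CARD('n) - 1) is an orthonormal basis of real^'n (0-based indexing).\<close>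
definition orthonormal_basis :: "(nat \<Rightarrow> real^'n) \<Rightarrow> bool" where
  "orthonormal_basis v \<longleftrightarrow>
     (\<forall>j<CARD('n). \<forall>k<CARD('n). v j \<bullet> v k = (if j = k then 1 else 0)) \<and>
     span (v ` {..<CARD('n)}) = UNIV"

end

theory Submission
  imports Defs
begin

(* Part (i): for an empirical measure of the points x_1, ..., x_N, 2 N^2 E_inf equals N^2 minus the
   number P of ordered pairs (i, j) with x_i . x_j <> 0, the diagonal included.  At most d+1 nonzero
   vectors are pairwise orthogonal, so a maximal orthogonal subfamily shows that some point is
   non-orthogonal to at least N/(d+1) of the points.  Removing it and inducting gives a Turan-type
   lower bound for P, which is attained exactly when the points lie on the axes {v_k, -v_k} of an
   orthonormal basis and are spread over the d+1 axes as evenly as possible.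

   Part (ii): on the sphere Lambda_inf(s,t) <= 1 - (s.t)^2, and the double integral of (s.t)^2 is
   the squared Frobenius norm of the second-moment matrix M of mu, whose trace is 1.  Hence
   |M|^2 >= 1/(d+1) and E_inf <= (1 - 1/(d+1))/2, with equality iff all inner products within the
   support lie in {0, 1, -1} and M = I/(d+1); the latter forces mass 1/(d+1) on every axis. *)

section \<open>Orthonormal bases\<close>

lemma obtain_orthonormal_basis_of_set:
  fixes R :: "(real^'n) set"
  assumes fin: "finite R" and card: "card R = CARD('n)" and orth: "pairwise orthogonal R"
    and unit: "\<And>r. r \<in> R \<Longrightarrow> norm r = 1"
  obtains v where "orthonormal_basis v" and "v ` {..<CARD('n)} = R"
proof -
  obtain v where bij: "bij_betw v {..<CARD('n)} R"
    using ex_bij_betw_nat_finite[OF fin] card by (auto simp: atLeast0LessThan)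
  have "independent R"
    using orth unit by (intro pairwise_orthogonal_independent) force+
  then have "dim R = DIM(real^'n)"
    by (simp add: dim_eq_card_independent card)
  then have span: "span R = UNIV"
    using dim_eq_full by blast
  have "orthonormal_basis v"
    unfolding orthonormal_basis_def
  proof (intro conjI allI impI)
    fix j k assume j: "j < CARD('n)" and k: "k < CARD('n)"
    have vj: "v j \<in> R" and vk: "v k \<in> R"
      using bij j k by (auto dest: bij_betw_apply)
    show "v j \<bullet> v k = (if j = k then 1 else 0)"
    proof (cases "j = k")
      case True
      then show ?thesis using unit[OF vj] by (simp add: dot_square_norm)
    next
      case False
      then have "v j \<noteq> v k"
        using bij j k by (auto simp: bij_betw_def inj_on_def)
      then show ?thesis
        using False orth vj vk by (auto simp: pairwise_def orthogonal_def)
    qed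
  qed (use bij span in \<open>simp add: bij_betw_def\<close>)
  with bij that show thesis
    by (simp add: bij_betw_def)
qed

lemma ex_orthonormal_basis: "\<exists>v :: nat \<Rightarrow> real^'n. orthonormal_basis v"
proof -
  have orth: "pairwise orthogonal (Basis :: (real^'n) set)"
    by (auto simp: pairwise_def orthogonal_def inner_not_same_Basis)
  show ?thesis
    by (rule obtain_orthonormal_basis_of_set[OF _ _ orth]) auto
qed

lemma orthonormal_basis_extend:
  fixes S :: "(real^'n) set"
  assumes fin: "finite S" and orth: "pairwise orthogonal S" and unit: "\<And>s. s \<in> S \<Longrightarrow> norm s = 1"
  obtains v where "orthonormal_basis v" and "S \<subseteq> v ` {..<CARD('n)}"
proof -
  define W where "W = {y \<in> UNIV. \<forall>x \<in> span S. orthogonal x y}"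
  have "subspace W"
    unfolding W_def using subspace_orthogonal_to_vectors[of "span S"] by simp
  then obtain B where BW: "B \<subseteq> W" and oB: "pairwise orthogonal B"
    and uB: "\<And>x. x \<in> B \<Longrightarrow> norm x = 1" and iB: "independent B" and cB: "card B = dim W"
    using orthonormal_basis_subspace by metis
  have iS: "independent S"
    using orth unit by (intro pairwise_orthogonal_independent) force+
  have "dim W + dim (span S) = dim (UNIV :: (real^'n) set)"
    unfolding W_def by (rule dim_subspace_orthogonal_to_vectors) auto
  then have dims: "card S + card B = CARD('n)"
    using cB dim_eq_card_independent[OF iS] by (simp add: dim_span)
  have SB: "orthogonal s b" if "s \<in> S" "b \<in> B" for s b
    using that BW span_base[of s S] unfolding W_def by blast
  have "S \<inter> B = {}"
    using SB uB by (fastforce simp: orthogonal_def)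
  then have "card (S \<union> B) = CARD('n)"
    using card_Un_disjoint fin independent_imp_finite[OF iB] dims by metis
  moreover have "pairwise orthogonal (S \<union> B)"
    using orth oB SB orthogonal_commute unfolding pairwise_def by blast
  ultimately obtain v where "orthonormal_basis v" "v ` {..<CARD('n)} = S \<union> B"
    using obtain_orthonormal_basis_of_set fin independent_imp_finite[OF iB] unit uB
    by (metis UnE finite_UnI)
  with that show thesis by blast
qed

lemma orthonormal_basis_inner:
  assumes "orthonormal_basis (v :: nat \<Rightarrow> real^'n)" "j < CARD('n)" "k < CARD('n)"
  shows "v j \<bullet> v k = (if j = k then 1 else 0)"
  using assms unfolding orthonormal_basis_def by blast

lemma orthonormal_basis_norm:
  assumes "orthonormal_basis (v :: nat \<Rightarrow> real^'n)" "k < CARD('n)"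
  shows "norm (v k) = 1"
  using orthonormal_basis_inner[OF assms(1,2,2)] by (simp add: norm_eq_sqrt_inner)

lemma orthonormal_basis_permute:
  assumes ob: "orthonormal_basis (v :: nat \<Rightarrow> real^'n)"
    and \<pi>: "bij_betw \<pi> {..<CARD('n)} {..<CARD('n)}"
  shows "orthonormal_basis (v \<circ> \<pi>)"
  unfolding orthonormal_basis_def
proof (intro conjI allI impI)
  fix j k assume j: "j < CARD('n)" and k: "k < CARD('n)"
  then have "\<pi> j = \<pi> k \<longleftrightarrow> j = k"
    using \<pi> by (auto simp: bij_betw_def inj_on_def)
  moreover have "\<pi> j < CARD('n)" "\<pi> k < CARD('n)"
    using \<pi> j k by (auto dest: bij_betw_apply)
  ultimately show "(v \<circ> \<pi>) j \<bullet> (v \<circ> \<pi>) k = (if j = k then 1 else 0)"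
    using orthonormal_basis_inner[OF ob] by simp
next
  have "(v \<circ> \<pi>) ` {..<CARD('n)} = v ` (\<pi> ` {..<CARD('n)})"
    by (simp add: image_comp)
  also have "\<dots> = v ` {..<CARD('n)}"
    using bij_betw_imp_surj_on[OF \<pi>] by simp
  finally show "span ((v \<circ> \<pi>) ` {..<CARD('n)}) = UNIV"
    using ob unfolding orthonormal_basis_def by simp
qed

lemma orthonormal_basis_orthogonal_eq_0:
  assumes ob: "orthonormal_basis (v :: nat \<Rightarrow> real^'n)"
    and orth: "\<And>l. l < CARD('n) \<Longrightarrow> y \<bullet> v l = 0"
  shows "y = 0"
proof -
  have "y \<in> span (v ` {..<CARD('n)})"
    using ob unfolding orthonormal_basis_def by simp
  moreover have "\<And>z. z \<in> v ` {..<CARD('n)} \<Longrightarrow> orthogonal y z"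
    using orth by (auto simp: orthogonal_def)
  ultimately have "orthogonal y y"
    by (rule orthogonal_to_span)
  then show ?thesis
    by (simp add: orthogonal_def)
qed

lemma orthonormal_basis_axis:
  assumes ob: "orthonormal_basis (v :: nat \<Rightarrow> real^'n)" and k: "k < CARD('n)"
    and orth: "\<And>l. l < CARD('n) \<Longrightarrow> l \<noteq> k \<Longrightarrow> x \<bullet> v l = 0" and x: "norm x = 1"
  shows "x \<in> {v k, - v k}"
proof -
  define c where "c = x \<bullet> v k"
  have "x - c *\<^sub>R v k = 0"
  proof (rule orthonormal_basis_orthogonal_eq_0[OF ob])
    fix l assume l: "l < CARD('n)"
    show "(x - c *\<^sub>R v k) \<bullet> v l = 0"
      using orth[OF l] orthonormal_basis_inner[OF ob k l] unfolding c_def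
      by (cases "l = k") (auto simp: inner_diff_left)
  qed
  then have xc: "x = c *\<^sub>R v k"
    by simp
  then have "\<bar>c\<bar> = 1"
    using x orthonormal_basis_norm[OF ob k] by simp
  then show ?thesis
    using xc by (cases "c \<ge> 0") auto
qed

lemma axis_vectors_inner_eq_0_iff:
  assumes ob: "orthonormal_basis (v :: nat \<Rightarrow> real^'n)" and "a < CARD('n)" "b < CARD('n)"
    and "x \<in> {v a, - v a}" "y \<in> {v b, - v b}"
  shows "x \<bullet> y = 0 \<longleftrightarrow> a \<noteq> b"
  using orthonormal_basis_inner[OF assms(1-3)] assms(4,5) by (auto split: if_splits)

lemma unit_inner_square_eq_1:
  fixes s u :: "real^'n"
  assumes "norm s = 1" "norm u = 1" "(s \<bullet> u)\<^sup>2 = 1"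
  shows "s \<in> {u, - u}"
proof -
  define c where "c = s \<bullet> u"
  have "s \<bullet> s = 1" "u \<bullet> u = 1"
    using assms by (simp_all add: dot_square_norm)
  then have "(s - c *\<^sub>R u) \<bullet> (s - c *\<^sub>R u) = 0"
    using assms(3) unfolding c_def
    by (simp add: inner_diff_left inner_diff_right inner_commute power2_eq_square)
  then have "s = c *\<^sub>R u"
    by simp
  moreover have "c = 1 \<or> c = -1"
    using assms(3) unfolding c_def by (metis power2_eq_1_iff)
  ultimately show ?thesis
    by auto
qed

section \<open>Counting non-orthogonal pairs\<close>

definition nonorth_degree :: "('a \<Rightarrow> real^'n) \<Rightarrow> 'a set \<Rightarrow> 'a \<Rightarrow> nat" where
  "nonorth_degree x I i = card {j \<in> I. x i \<bullet> x j \<noteq> 0}"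

definition nonorth_pairs :: "('a \<Rightarrow> real^'n) \<Rightarrow> 'a set \<Rightarrow> nat" where
  "nonorth_pairs x I = (\<Sum>i\<in>I. nonorth_degree x I i)"

text \<open>The value of \<^const>\<open>nonorth_pairs\<close> when the points are put on the \<open>n\<close> axes cyclically:
  the \<open>(m+1)\<close>-st point joins an axis already carrying \<open>m div n\<close> points.\<close>

fun min_nonorth_pairs :: "nat \<Rightarrow> nat \<Rightarrow> nat" where
  "min_nonorth_pairs n 0 = 0"
| "min_nonorth_pairs n (Suc m) = min_nonorth_pairs n m + 2 * (m div n) + 1"

lemma min_nonorth_pairs_small: "m \<le> n \<Longrightarrow> min_nonorth_pairs n m = m"
  by (induction m) auto

lemma of_nat_card_filter:
  "finite A \<Longrightarrow> of_nat (card {j \<in> A. P j}) = (\<Sum>j\<in>A. if P j then 1 else (0 :: 'b :: semiring_1))"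
  by (simp add: sum.If_cases Int_def)

lemma ex_maximal_orthogonal_subfamily:
  fixes x :: "'a \<Rightarrow> real^'n"
  assumes fin: "finite I" and nz: "\<And>i. i \<in> I \<Longrightarrow> x i \<noteq> 0"
  shows "\<exists>J\<subseteq>I. (\<forall>a\<in>J. \<forall>b\<in>J. a \<noteq> b \<longrightarrow> x a \<bullet> x b = 0) \<and> (\<forall>i\<in>I. \<exists>j\<in>J. x i \<bullet> x j \<noteq> 0)"
proof -
  define F where "F = {J. J \<subseteq> I \<and> (\<forall>a\<in>J. \<forall>b\<in>J. a \<noteq> b \<longrightarrow> x a \<bullet> x b = 0)}"
  have "finite F"
    unfolding F_def using fin by (auto intro: finite_subset[of _ "Pow I"])
  moreover have "{} \<in> F"
    unfolding F_def by auto
  ultimately obtain J where J: "J \<in> F" and max: "\<forall>K\<in>F. J \<subseteq> K \<longrightarrow> J = K"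
    using finite_has_maximal[of F] by blast
  have "\<exists>j\<in>J. x i \<bullet> x j \<noteq> 0" if i: "i \<in> I" for i
  proof (rule ccontr)
    assume "\<not> ?thesis"
    then have orth: "\<forall>j\<in>J. x i \<bullet> x j = 0"
      by blast
    then have "insert i J \<in> F"
      using J i unfolding F_def by (auto simp: inner_commute)
    then have "J = insert i J"
      using max by blast
    then have "x i \<bullet> x i = 0"
      using orth by blast
    then show False
      using nz[OF i] by simp
  qed
  then show ?thesis
    using J unfolding F_def by (auto intro!: exI[of _ J])
qed

lemma card_orthogonal_subfamily_le:
  fixes x :: "'a \<Rightarrow> real^'n"
  assumes fin: "finite J" and orth: "\<forall>a\<in>J. \<forall>b\<in>J. a \<noteq> b \<longrightarrow> x a \<bullet> x b = 0"
    and nz: "\<And>i. i \<in> J \<Longrightarrow> x i \<noteq> 0"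
  shows "card J \<le> CARD('n)"
proof -
  have "inj_on x J"
  proof
    fix a b assume ab: "a \<in> J" "b \<in> J" "x a = x b"
    show "a = b"
    proof (rule ccontr)
      assume "a \<noteq> b"
      then have "x a \<bullet> x b = 0"
        using orth ab by blast
      then have "x a \<bullet> x a = 0"
        using ab(3) by simp
      then show False
        using nz[OF ab(1)] by simp
    qed
  qed
  moreover have "independent (x ` J)"
    using orth nz by (intro pairwise_orthogonal_independent) (auto simp: pairwise_def orthogonal_def)
  then have "card (x ` J) \<le> DIM(real^'n)"
    using independent_bound by blast
  ultimately show ?thesis
    by (simp add: card_image)
qed

text \<open>Pigeonhole over a maximal orthogonal subfamily, which has at most \<open>CARD('n)\<close> members
  and meets every point non-orthogonally.\<close>

lemma exists_large_nonorth_degree: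
  fixes x :: "'a \<Rightarrow> real^'n"
  assumes fin: "finite I" and ne: "I \<noteq> {}" and nz: "\<And>i. i \<in> I \<Longrightarrow> x i \<noteq> 0"
  shows "\<exists>i\<in>I. card I \<le> CARD('n) * nonorth_degree x I i"
proof (rule ccontr)
  assume "\<not> ?thesis"
  then have small: "\<And>i. i \<in> I \<Longrightarrow> CARD('n) * nonorth_degree x I i < card I"
    by (simp add: not_le)
  have "\<exists>J\<subseteq>I. (\<forall>a\<in>J. \<forall>b\<in>J. a \<noteq> b \<longrightarrow> x a \<bullet> x b = 0) \<and> (\<forall>i\<in>I. \<exists>j\<in>J. x i \<bullet> x j \<noteq> 0)"
    by (rule ex_maximal_orthogonal_subfamily[OF fin]) (rule nz)
  then obtain J where JI: "J \<subseteq> I" and orth: "\<forall>a\<in>J. \<forall>b\<in>J. a \<noteq> b \<longrightarrow> x a \<bullet> x b = 0"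
    and cov: "\<forall>i\<in>I. \<exists>j\<in>J. x i \<bullet> x j \<noteq> 0"
    by (elim exE conjE)
  have fJ: "finite J"
    using JI fin finite_subset by blast
  have cardJ: "card J \<le> CARD('n)"
    using JI nz by (intro card_orthogonal_subfamily_le[OF fJ orth]) auto
  have "J \<noteq> {}"
    using ne cov by blast
  have "I \<subseteq> (\<Union>j\<in>J. {i \<in> I. x j \<bullet> x i \<noteq> 0})"
  proof
    fix i assume "i \<in> I"
    then obtain j where "j \<in> J" "x i \<bullet> x j \<noteq> 0"
      using cov by blast
    with \<open>i \<in> I\<close> show "i \<in> (\<Union>j\<in>J. {i \<in> I. x j \<bullet> x i \<noteq> 0})"
      by (auto simp: inner_commute)
  qed
  moreover have "finite (\<Union>j\<in>J. {i \<in> I. x j \<bullet> x i \<noteq> 0})"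
    by (rule finite_subset[of _ I]) (use fin in auto)
  ultimately have "card I \<le> card (\<Union>j\<in>J. {i \<in> I. x j \<bullet> x i \<noteq> 0})"
    by (simp add: card_mono)
  also have "\<dots> \<le> (\<Sum>j\<in>J. nonorth_degree x I j)"
    unfolding nonorth_degree_def by (rule card_UN_le[OF fJ])
  finally have "CARD('n) * card I \<le> (\<Sum>j\<in>J. CARD('n) * nonorth_degree x I j)"
    by (simp add: sum_distrib_left[symmetric])
  also have "\<dots> < (\<Sum>j\<in>J. card I)"
    by (rule sum_strict_mono[OF fJ \<open>J \<noteq> {}\<close>]) (use small JI in blast)
  also have "\<dots> \<le> CARD('n) * card I"
    using cardJ by simp
  finally show False
    by simp
qed

lemma nonorth_degree_remove:
  fixes x :: "'a \<Rightarrow> real^'n"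
  assumes "finite I" and "i \<in> I" and "x i \<noteq> 0"
  shows "nonorth_degree x I i = Suc (card {j \<in> I - {i}. x i \<bullet> x j \<noteq> 0})"
proof -
  have "{j \<in> I. x i \<bullet> x j \<noteq> 0} = insert i {j \<in> I - {i}. x i \<bullet> x j \<noteq> 0}"
    using assms by auto
  then show ?thesis
    unfolding nonorth_degree_def using assms(1) by simp
qed

lemma nonorth_pairs_remove:
  fixes x :: "'a \<Rightarrow> real^'n"
  assumes fin: "finite I" and i: "i \<in> I" and nz: "x i \<noteq> 0"
  shows "nonorth_pairs x I + 1 = nonorth_pairs x (I - {i}) + 2 * nonorth_degree x I i"
proof -
  let ?I = "I - {i}"
  have fI: "finite ?I"
    using fin by simp
  have deg_j: "nonorth_degree x I j = nonorth_degree x ?I j + (if x i \<bullet> x j \<noteq> 0 then 1 else 0)"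
    if "j \<in> ?I" for j
  proof -
    have "{k \<in> I. x j \<bullet> x k \<noteq> 0} =
        (if x i \<bullet> x j \<noteq> 0 then insert i {k \<in> ?I. x j \<bullet> x k \<noteq> 0} else {k \<in> ?I. x j \<bullet> x k \<noteq> 0})"
      using i by (auto simp: inner_commute)
    then show ?thesis
      unfolding nonorth_degree_def using fI by simp
  qed
  have "nonorth_pairs x I = nonorth_degree x I i + (\<Sum>j\<in>?I. nonorth_degree x I j)"
    unfolding nonorth_pairs_def using sum.remove[OF fin i] by simp
  also have "(\<Sum>j\<in>?I. nonorth_degree x I j) =
      nonorth_pairs x ?I + (\<Sum>j\<in>?I. if x i \<bullet> x j \<noteq> 0 then 1 else 0)"
    unfolding nonorth_pairs_def using deg_j by (simp add: sum.distrib)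
  also have "(\<Sum>j\<in>?I. if x i \<bullet> x j \<noteq> 0 then 1 else 0) = card {j \<in> ?I. x i \<bullet> x j \<noteq> 0}"
    using of_nat_card_filter[OF fI, where 'b = nat] by simp
  finally show ?thesis
    using nonorth_degree_remove[OF fin i, of x, OF nz] by simp
qed

lemma obtain_removable_point:
  fixes x :: "'a \<Rightarrow> real^'n"
  assumes fin: "finite I" and card: "card I = Suc m" and nz: "\<And>i. i \<in> I \<Longrightarrow> x i \<noteq> 0"
  obtains i where "i \<in> I" and "m div CARD('n) < nonorth_degree x I i"
    and "nonorth_pairs x I + 1 = nonorth_pairs x (I - {i}) + 2 * nonorth_degree x I i"
proof -
  obtain i where i: "i \<in> I" and deg: "Suc m \<le> CARD('n) * nonorth_degree x I i"
    using exists_large_nonorth_degree[OF fin _ nz] card by force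
  have "CARD('n) * (m div CARD('n)) \<le> m"
    by simp
  then have "CARD('n) * (m div CARD('n)) < CARD('n) * nonorth_degree x I i"
    using deg by linarith
  then have "m div CARD('n) < nonorth_degree x I i"
    by simp
  with i that nonorth_pairs_remove[OF fin i, of x, OF nz[OF i]] show thesis
    by blast
qed

lemma min_nonorth_pairs_le:
  fixes x :: "'a \<Rightarrow> real^'n"
  assumes "finite I" and "\<And>i. i \<in> I \<Longrightarrow> x i \<noteq> 0"
  shows "min_nonorth_pairs CARD('n) (card I) \<le> nonorth_pairs x I"
  using assms
proof (induction "card I" arbitrary: I)
  case 0
  then show ?case
    by (simp add: nonorth_pairs_def)
next
  case (Suc m)
  obtain i where i: "i \<in> I" and deg: "m div CARD('n) < nonorth_degree x I i"
    and rem: "nonorth_pairs x I + 1 = nonorth_pairs x (I - {i}) + 2 * nonorth_degree x I i"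
    using obtain_removable_point[of I m x, OF Suc.prems(1) Suc.hyps(2)[symmetric] Suc.prems(2)]
    by blast
  have m: "m = card (I - {i})"
    using i Suc.hyps(2) by simp
  then have "min_nonorth_pairs CARD('n) (card (I - {i})) \<le> nonorth_pairs x (I - {i})"
    using Suc.prems by (intro Suc.hyps(1)) auto
  then show ?case
    using rem deg m Suc.hyps(2)[symmetric] by simp
qed

section \<open>Equality in the lower bound\<close>

definition on_axes :: "(nat \<Rightarrow> real^'n) \<Rightarrow> ('a \<Rightarrow> nat) \<Rightarrow> ('a \<Rightarrow> real^'n) \<Rightarrow> 'a set \<Rightarrow> bool" where
  "on_axes v g x I \<longleftrightarrow> (\<forall>i\<in>I. g i < CARD('n) \<and> x i \<in> {v (g i), - v (g i)})"

definition balanced :: "('a \<Rightarrow> nat) \<Rightarrow> 'a set \<Rightarrow> nat \<Rightarrow> bool" where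
  "balanced g I n \<longleftrightarrow> (\<forall>k<n. \<forall>l<n. card {i \<in> I. g i = k} \<le> card {i \<in> I. g i = l} + 1)"

lemma sum_card_fibres:
  fixes g :: "'a \<Rightarrow> nat"
  assumes "finite I" and "\<forall>i\<in>I. g i < n"
  shows "(\<Sum>l<n. card {i \<in> I. g i = l}) = card I"
  using sum.group[OF assms(1), of "{..<n}" g "\<lambda>_. 1 :: nat"] assms(2) by auto

lemma balanced_card_ge:
  fixes g :: "'a \<Rightarrow> nat"
  assumes fin: "finite I" and g: "\<forall>i\<in>I. g i < n" and bal: "balanced g I n" and k: "k < n"
  shows "card I div n \<le> card {i \<in> I. g i = k}"
proof (rule ccontr)
  let ?c = "\<lambda>l. card {i \<in> I. g i = l}"
  assume "\<not> ?thesis"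
  then have small: "?c k < card I div n"
    by simp
  have "card I = (\<Sum>l<n. ?c l)"
    using sum_card_fibres[OF fin g] by simp
  also have "\<dots> < (\<Sum>l<n. ?c k + 1)"
    by (rule sum_strict_mono_ex1) (use bal k in \<open>auto simp: balanced_def\<close>)
  also have "\<dots> = n * (?c k + 1)"
    by simp
  also have "\<dots> \<le> n * (card I div n)"
    using small by (intro mult_le_mono2) simp
  also have "\<dots> \<le> card I"
    by simp
  finally show False
    by simp
qed

lemma balanced_card_cases:
  fixes g :: "'a \<Rightarrow> nat"
  assumes fin: "finite I" and g: "\<forall>i\<in>I. g i < n" and bal: "balanced g I n" and n: "0 < n"
  shows "\<forall>k<n. card {i \<in> I. g i = k} \<in> {card I div n, card I div n + 1}"
    and "card {k \<in> {..<n}. card {i \<in> I. g i = k} = card I div n + 1} = card I mod n"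
proof -
  define c where "c k = card {i \<in> I. g i = k}" for k
  define q where "q = card I div n"
  have sumc: "(\<Sum>l<n. c l) = card I"
    unfolding c_def by (rule sum_card_fibres[OF fin g])
  have upper: "c k \<le> q + 1" if k: "k < n" for k
  proof (rule ccontr)
    assume "\<not> ?thesis"
    then have "q + 1 \<le> c l" if "l < n" for l
      using bal k that unfolding balanced_def c_def by fastforce
    then have "n * (q + 1) \<le> card I"
      using sum_mono[of "{..<n}" "\<lambda>_. q + 1" c] sumc by simp
    moreover have "card I < n * q + n"
      using mult_div_mod_eq[of n "card I"] mod_less_divisor[OF n, of "card I"] unfolding q_def
      by linarith
    ultimately show False
      by simp
  qed
  have vals: "c k = q \<or> c k = q + 1" if "k < n" for k
    using balanced_card_ge[OF fin g bal that] upper[OF that] unfolding c_def q_def by linarith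
  then show "\<forall>k<n. card {i \<in> I. g i = k} \<in> {card I div n, card I div n + 1}"
    unfolding c_def q_def by blast
  have "card I = (\<Sum>l<n. q + (if c l = q + 1 then 1 else 0))"
    unfolding sumc[symmetric] by (rule sum.cong) (use vals in auto)
  also have "\<dots> = n * q + card {l \<in> {..<n}. c l = q + 1}"
    using of_nat_card_filter[of "{..<n}" "\<lambda>l. c l = q + 1", where 'b = nat] by (simp add: sum.distrib)
  finally have "card {l \<in> {..<n}. c l = q + 1} = card I mod n"
    using mult_div_mod_eq[of n "card I"] unfolding q_def by linarith
  then show "card {k \<in> {..<n}. card {i \<in> I. g i = k} = card I div n + 1} = card I mod n"
    unfolding c_def q_def .
qed

lemma balanced_insert_smallest:
  fixes g :: "'a \<Rightarrow> nat"
  assumes bal: "balanced g I n" and fin: "finite I" and i: "i \<notin> I" and k: "k < n"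
    and smallest: "\<And>l. l < n \<Longrightarrow> card {j \<in> I. g j = k} \<le> card {j \<in> I. g j = l}"
  shows "balanced (g(i := k)) (insert i I) n"
proof -
  have "{j \<in> insert i I. (g(i := k)) j = l} =
      (if l = k then insert i {j \<in> I. g j = l} else {j \<in> I. g j = l})" for l
    using i by auto
  then have count: "card {j \<in> insert i I. (g(i := k)) j = l} =
      card {j \<in> I. g j = l} + (if l = k then 1 else 0)" for l
    using fin i by simp
  show ?thesis
    unfolding balanced_def count
  proof (intro allI impI)
    fix a b assume a: "a < n" and b: "b < n"
    have "card {j \<in> I. g j = a} \<le> card {j \<in> I. g j = b} + 1"
      "card {j \<in> I. g j = a} \<le> card {j \<in> I. g j = k} + 1"
      using bal a b k unfolding balanced_def by blast+
    then show "card {j \<in> I. g j = a} + (if a = k then 1 else 0) \<le> card {j \<in> I. g j = b} + (if b = k then 1 else 0) + 1"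
      using smallest[OF b] by auto
  qed
qed

lemma pairwise_orthogonal_if_nonorth_pairs_eq_card:
  fixes x :: "'a \<Rightarrow> real^'n"
  assumes fin: "finite I" and nz: "\<And>i. i \<in> I \<Longrightarrow> x i \<noteq> 0" and eq: "nonorth_pairs x I = card I"
  shows "\<forall>i\<in>I. \<forall>j\<in>I. i \<noteq> j \<longrightarrow> x i \<bullet> x j = 0"
proof -
  have pos: "1 \<le> nonorth_degree x I i" if "i \<in> I" for i
    using nonorth_degree_remove[OF fin that, of x, OF nz[OF that]] by simp
  have one: "nonorth_degree x I i = 1" if i: "i \<in> I" for i
  proof (rule ccontr)
    assume "nonorth_degree x I i \<noteq> 1"
    then have "1 < nonorth_degree x I i"
      using pos[OF i] by linarith
    then have "(\<Sum>i\<in>I. 1) < nonorth_pairs x I"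
      unfolding nonorth_pairs_def by (intro sum_strict_mono_ex1[OF fin]) (use pos i in auto)
    then show False
      using eq by simp
  qed
  show ?thesis
  proof (intro ballI impI)
    fix i j assume i: "i \<in> I" and j: "j \<in> I" and ij: "i \<noteq> j"
    show "x i \<bullet> x j = 0"
    proof (rule ccontr)
      assume "x i \<bullet> x j \<noteq> 0"
      then have "{i, j} \<subseteq> {k \<in> I. x i \<bullet> x k \<noteq> 0}"
        using i j nz[OF i] by auto
      then have "card {i, j} \<le> nonorth_degree x I i"
        unfolding nonorth_degree_def by (rule card_mono[rotated]) (use fin in simp)
      then show False
        using one[OF i] ij by simp
    qed
  qed
qed

lemma orthonormal_family_in_basis:
  fixes x :: "'a \<Rightarrow> real^'n"
  assumes fin: "finite I" and unit: "\<And>i. i \<in> I \<Longrightarrow> norm (x i) = 1"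
    and orth: "\<forall>i\<in>I. \<forall>j\<in>I. i \<noteq> j \<longrightarrow> x i \<bullet> x j = 0"
  shows "\<exists>v g. orthonormal_basis v \<and> (\<forall>i\<in>I. g i < CARD('n) \<and> v (g i) = x i)"
proof -
  have "pairwise orthogonal (x ` I)"
    using orth by (auto simp: pairwise_def orthogonal_def)
  then obtain v where ob: "orthonormal_basis v" and sub: "x ` I \<subseteq> v ` {..<CARD('n)}"
    using orthonormal_basis_extend[of "x ` I"] fin unit by blast
  define g where "g i = inv_into {..<CARD('n)} v (x i)" for i
  have "g i < CARD('n) \<and> v (g i) = x i" if "i \<in> I" for i
  proof -
    have xi: "x i \<in> v ` {..<CARD('n)}"
      using sub that by blast
    show ?thesis
      using inv_into_into[OF xi] f_inv_into_f[OF xi] unfolding g_def by simp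
  qed
  with ob show ?thesis
    by blast
qed

lemma balanced_axes_of_orthonormal_family:
  fixes x :: "'a \<Rightarrow> real^'n"
  assumes fin: "finite I" and unit: "\<And>i. i \<in> I \<Longrightarrow> norm (x i) = 1"
    and orth: "\<forall>i\<in>I. \<forall>j\<in>I. i \<noteq> j \<longrightarrow> x i \<bullet> x j = 0"
  shows "\<exists>v g. orthonormal_basis v \<and> on_axes v g x I \<and> balanced g I CARD('n)"
proof -
  obtain v g where ob: "orthonormal_basis v" and g: "\<forall>i\<in>I. g i < CARD('n) \<and> v (g i) = x i"
    using orthonormal_family_in_basis[OF fin unit orth] by blast
  have "i = j" if "i \<in> I" "j \<in> I" "g i = g j" for i j
  proof (rule ccontr)
    assume "i \<noteq> j"
    moreover have "x i = x j"
      using g that by metis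
    ultimately have "x i \<bullet> x i = 0"
      using orth that by metis
    then show False
      using unit[OF that(1)] by simp
  qed
  then have at_most_one: "card {i \<in> I. g i = k} \<le> Suc 0" for k
    using fin by (auto simp: card_le_Suc0_iff_eq)
  have "balanced g I CARD('n)"
    unfolding balanced_def
  proof (intro allI impI)
    fix k l
    show "card {i \<in> I. g i = k} \<le> card {i \<in> I. g i = l} + 1"
      using at_most_one[of k] by linarith
  qed
  moreover have "on_axes v g x I"
    using g unfolding on_axes_def by force
  ultimately show ?thesis
    using ob by blast
qed

text \<open>All points of the axis carrying \<open>y\<close> are non-orthogonal to \<open>y\<close>, so they already exhaust
  the \<open>q\<close> points non-orthogonal to \<open>y\<close>; a second axis with a nonzero coordinate of \<open>y\<close> would
  contribute at least one more point.\<close>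

lemma nonorth_point_on_axis:
  fixes x :: "'a \<Rightarrow> real^'n"
  assumes ob: "orthonormal_basis v" and axes: "on_axes v g x I" and fin: "finite I"
    and large: "\<And>l. l < CARD('n) \<Longrightarrow> q \<le> card {j \<in> I. g j = l}" and q: "1 \<le> q"
    and deg: "card {j \<in> I. y \<bullet> x j \<noteq> 0} = q" and y: "norm y = 1"
  obtains k where "k < CARD('n)" "y \<in> {v k, - v k}" "card {j \<in> I. g j = k} = q"
proof -
  define N where "N = {j \<in> I. y \<bullet> x j \<noteq> 0}"
  have fN: "finite N"
    using fin N_def by simp
  have sub: "{j \<in> I. g j = l} \<subseteq> N" if "l < CARD('n)" "y \<bullet> v l \<noteq> 0" for l
    using axes that unfolding on_axes_def N_def by auto
  obtain k where k: "k < CARD('n)" and yk: "y \<bullet> v k \<noteq> 0"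
    using orthonormal_basis_orthogonal_eq_0[OF ob, of y] y by force
  have "card {j \<in> I. g j = k} = card N"
    using card_mono[OF fN sub[OF k yk]] large[OF k] deg unfolding N_def by simp
  then have classk: "{j \<in> I. g j = k} = N"
    by (rule card_subset_eq[OF fN sub[OF k yk]])
  have "y \<bullet> v l = 0" if l: "l < CARD('n)" "l \<noteq> k" for l
  proof (rule ccontr)
    assume "y \<bullet> v l \<noteq> 0"
    then have "{j \<in> I. g j = l} \<subseteq> N"
      using sub l by blast
    moreover have "0 < card {j \<in> I. g j = l}"
      using large[OF l(1)] q by linarith
    then have "{j \<in> I. g j = l} \<noteq> {}"
      by (simp add: card_gt_0_iff)
    ultimately show False
      using classk l(2) by blast
  qed
  then have "y \<in> {v k, - v k}"
    using orthonormal_basis_axis[OF ob k _ y] by blast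
  with k classk deg that show thesis
    unfolding N_def by simp
qed

lemma balanced_axes_insert:
  fixes x :: "'a \<Rightarrow> real^'n"
  assumes ob: "orthonormal_basis v" and axes: "on_axes v g x I" and bal: "balanced g I CARD('n)"
    and fin: "finite I" and i: "i \<notin> I" and large: "CARD('n) \<le> card I"
    and deg: "card {j \<in> I. x i \<bullet> x j \<noteq> 0} = card I div CARD('n)" and unit: "norm (x i) = 1"
  shows "\<exists>g'. on_axes v g' x (insert i I) \<and> balanced g' (insert i I) CARD('n)"
proof -
  let ?q = "card I div CARD('n)"
  have q: "1 \<le> ?q"
    using large by (simp add: div_le_mono[of "CARD('n)" "card I" "CARD('n)", simplified])
  have classes: "?q \<le> card {j \<in> I. g j = l}" if "l < CARD('n)" for l
    using balanced_card_ge[OF fin _ bal that] axes unfolding on_axes_def by simp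
  obtain k where k: "k < CARD('n)" "x i \<in> {v k, - v k}" and smallest: "card {j \<in> I. g j = k} = ?q"
    using nonorth_point_on_axis[OF ob axes fin classes q deg unit] by blast
  have "balanced (g(i := k)) (insert i I) CARD('n)"
    using balanced_insert_smallest[OF bal fin i k(1)] classes smallest by simp
  moreover have "on_axes v (g(i := k)) x (insert i I)"
    using axes k i unfolding on_axes_def by simp
  ultimately show ?thesis
    by blast
qed

lemma nonorth_pairs_eq_min_imp_balanced_axes:
  fixes x :: "'a \<Rightarrow> real^'n"
  assumes "finite I" and "\<And>i. i \<in> I \<Longrightarrow> norm (x i) = 1"
    and "nonorth_pairs x I = min_nonorth_pairs CARD('n) (card I)"
  shows "\<exists>v g. orthonormal_basis v \<and> on_axes v g x I \<and> balanced g I CARD('n)"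
  using assms
proof (induction "card I" arbitrary: I)
  case 0
  then show ?case
    using balanced_axes_of_orthonormal_family[of I x] by simp
next
  case (Suc m)
  note fin = Suc.prems(1) and unit = Suc.prems(2) and eq = Suc.prems(3)
  have nz: "\<And>i. i \<in> I \<Longrightarrow> x i \<noteq> 0"
    using unit by fastforce
  show ?case
  proof (cases "card I \<le> CARD('n)")
    case True
    then have card_eq: "nonorth_pairs x I = card I"
      using eq min_nonorth_pairs_small by simp
    have orth: "\<forall>i\<in>I. \<forall>j\<in>I. i \<noteq> j \<longrightarrow> x i \<bullet> x j = 0"
      by (rule pairwise_orthogonal_if_nonorth_pairs_eq_card[OF fin _ card_eq]) (rule nz)
    show ?thesis
      by (rule balanced_axes_of_orthonormal_family[OF fin _ orth]) (rule unit)
  next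
    case False
    obtain i where i: "i \<in> I" and deg: "m div CARD('n) < nonorth_degree x I i"
      and rem: "nonorth_pairs x I + 1 = nonorth_pairs x (I - {i}) + 2 * nonorth_degree x I i"
      using obtain_removable_point[of I m x, OF fin Suc.hyps(2)[symmetric] nz] by blast
    define I' where "I' = I - {i}"
    have fin': "finite I'" and m: "m = card I'" and I: "I = insert i I'" and i': "i \<notin> I'"
      using fin i Suc.hyps(2) unfolding I'_def by auto
    have "min_nonorth_pairs CARD('n) (card I') \<le> nonorth_pairs x I'"
      using fin' nz unfolding I'_def by (intro min_nonorth_pairs_le) auto
    then have eq': "nonorth_pairs x I' = min_nonorth_pairs CARD('n) (card I')"
      and deg': "nonorth_degree x I i = m div CARD('n) + 1"
      using eq rem deg m Suc.hyps(2)[symmetric] unfolding I'_def by simp_all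
    obtain v g where ob: "orthonormal_basis v" and axes: "on_axes v g x I'"
      and bal: "balanced g I' CARD('n)"
      using Suc.hyps(1)[OF m fin' _ eq'] unit unfolding I'_def by blast
    have "card {j \<in> I'. x i \<bullet> x j \<noteq> 0} = card I' div CARD('n)"
      using nonorth_degree_remove[OF fin i, of x, OF nz[OF i]] deg' m unfolding I'_def by simp
    moreover have "CARD('n) \<le> card I'"
      using False fin' i' unfolding I by simp
    ultimately obtain g' where "on_axes v g' x I" "balanced g' I CARD('n)"
      using balanced_axes_insert[OF ob axes bal fin' i' _ _ unit[OF i]] unfolding I by blast
    with ob show ?thesis
      by blast
  qed
qed

lemma card_mod_eq:
  assumes k: "k < n"
  shows "card {i \<in> {..<N}. i mod n = k} = N div n + (if k < N mod n then 1 else 0)"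
proof (induction N)
  case 0
  then show ?case
    by simp
next
  case (Suc N)
  have "{i \<in> {..<Suc N}. i mod n = k} =
      (if N mod n = k then insert N {i \<in> {..<N}. i mod n = k} else {i \<in> {..<N}. i mod n = k})"
    by (auto simp: less_Suc_eq)
  then have step: "card {i \<in> {..<Suc N}. i mod n = k} =
      card {i \<in> {..<N}. i mod n = k} + (if N mod n = k then 1 else 0)"
    by simp
  show ?case
  proof (cases "Suc (N mod n) = n")
    case True
    then have "Suc N mod n = 0" "Suc N div n = Suc (N div n)"
      by (simp_all add: mod_Suc div_Suc)
    then show ?thesis
      using step Suc.IH True k by auto
  next
    case False
    then have "Suc N mod n = Suc (N mod n)" "Suc N div n = N div n"
      by (simp_all add: mod_Suc div_Suc)
    then show ?thesis
      using step Suc.IH k mod_less_divisor[of n N] by auto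
  qed
qed

lemma balanced_mod: "balanced (\<lambda>i. i mod n) {..<N} n"
  unfolding balanced_def
proof (intro allI impI)
  fix k l assume "k < n" "l < n"
  then show "card {i \<in> {..<N}. i mod n = k} \<le> card {i \<in> {..<N}. i mod n = l} + 1"
    unfolding card_mod_eq[OF \<open>k < n\<close>] card_mod_eq[OF \<open>l < n\<close>] by simp
qed

lemma nonorth_pairs_cyclic_axes:
  fixes x :: "nat \<Rightarrow> real^'n"
  assumes ob: "orthonormal_basis v"
    and axes: "\<forall>i<N. x i \<in> {v (i mod CARD('n)), - v (i mod CARD('n))}"
  shows "nonorth_pairs x {..<N} = min_nonorth_pairs CARD('n) N"
  using axes
proof (induction N)
  case 0
  then show ?case
    by (simp add: nonorth_pairs_def)
next
  case (Suc N)
  let ?n = "CARD('n)"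
  have N: "N mod ?n < ?n"
    by simp
  have xN: "x N \<in> {v (N mod ?n), - v (N mod ?n)}"
    using Suc.prems by simp
  then have "x N \<noteq> 0"
    using orthonormal_basis_norm[OF ob N] by auto
  then have rem: "nonorth_pairs x {..<Suc N} + 1 = nonorth_pairs x {..<N} + 2 * nonorth_degree x {..<Suc N} N"
    using nonorth_pairs_remove[of "{..<Suc N}" N x] by (simp add: lessThan_Suc)
  have "x N \<bullet> x j \<noteq> 0 \<longleftrightarrow> j mod ?n = N mod ?n" if "j < Suc N" for j
    using axis_vectors_inner_eq_0_iff[OF ob N _ xN, of "j mod ?n" "x j"] Suc.prems that by auto
  then have "{j \<in> {..<Suc N}. x N \<bullet> x j \<noteq> 0} = insert N {j \<in> {..<N}. j mod ?n = N mod ?n}"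
    by (auto simp: less_Suc_eq)
  then have "nonorth_degree x {..<Suc N} N = Suc (N div ?n)"
    unfolding nonorth_degree_def using card_mod_eq[OF N, of N] by simp
  then show ?case
    using rem Suc by simp
qed

section \<open>Relabelling balanced configurations\<close>

lemma ex_fibre_preserving_bij_betw:
  fixes f :: "'a \<Rightarrow> 'c" and h :: "'b \<Rightarrow> 'c"
  assumes fin: "finite A" "finite B" and fibres: "\<And>y. card {b \<in> B. h b = y} = card {a \<in> A. f a = y}"
  shows "\<exists>\<sigma>. bij_betw \<sigma> B A \<and> (\<forall>b\<in>B. f (\<sigma> b) = h b)"
proof -
  have "\<forall>y. \<exists>\<beta>. bij_betw \<beta> {b \<in> B. h b = y} {a \<in> A. f a = y}"
    using fin fibres by (intro allI finite_same_card_bij) auto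
  from choice[OF this] obtain \<beta> where "\<forall>y. bij_betw (\<beta> y) {b \<in> B. h b = y} {a \<in> A. f a = y}"
    by (elim exE)
  then have \<beta>: "bij_betw (\<beta> y) {b \<in> B. h b = y} {a \<in> A. f a = y}" for y
    by blast
  define \<sigma> where "\<sigma> b = \<beta> (h b) b" for b
  have "bij_betw \<sigma> {b \<in> B. h b = y} {a \<in> A. f a = y}" for y
    using \<beta>[of y] bij_betw_cong[of "{b \<in> B. h b = y}" \<sigma> "\<beta> y"] unfolding \<sigma>_def by simp
  then have "bij_betw \<sigma> (\<Union>y. {b \<in> B. h b = y}) (\<Union>y. {a \<in> A. f a = y})"
    by (intro bij_betw_UNION_disjoint) (auto simp: disjoint_family_on_def)
  moreover have "(\<Union>y. {b \<in> B. h b = y}) = B" "(\<Union>y. {a \<in> A. f a = y}) = A"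
    by auto
  moreover have "f (\<sigma> b) = h b" if "b \<in> B" for b
    using bij_betw_apply[OF \<beta>[of "h b"]] that unfolding \<sigma>_def by simp
  ultimately show ?thesis
    by auto
qed

lemma card_fibres_two_valued:
  fixes c :: "nat \<Rightarrow> nat"
  assumes "\<forall>k<n. c k \<in> {q, q + 1}"
  shows "card {k \<in> {..<n}. c k = y} =
    (if y = q + 1 then card {k \<in> {..<n}. c k = q + 1}
     else if y = q then n - card {k \<in> {..<n}. c k = q + 1} else 0)"
proof -
  have low: "{k \<in> {..<n}. c k = q} = {..<n} - {k \<in> {..<n}. c k = q + 1}"
    using assms by auto
  have "card {k \<in> {..<n}. c k = q} = n - card {k \<in> {..<n}. c k = q + 1}"
    unfolding low by (subst card_Diff_subset) auto
  moreover have "{k \<in> {..<n}. c k = y} = {}" if "y \<noteq> q" "y \<noteq> q + 1"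
    using assms that by auto
  ultimately show ?thesis
    by auto
qed

text \<open>Two balanced labellings with values below \<open>n\<close> have the same multiset of class sizes, so they
  differ by a relabelling of the classes and a permutation of the points.\<close>

lemma balanced_labellings_conjugate:
  fixes g h :: "'a \<Rightarrow> nat"
  assumes fin: "finite I" and n: "0 < n"
    and g: "\<forall>i\<in>I. g i < n" "balanced g I n" and h: "\<forall>i\<in>I. h i < n" "balanced h I n"
  shows "\<exists>\<pi> \<sigma>. bij_betw \<pi> {..<n} {..<n} \<and> bij_betw \<sigma> I I \<and> (\<forall>i\<in>I. g (\<sigma> i) = \<pi> (h i))"
proof -
  define cg ch where "cg k = card {i \<in> I. g i = k}" and "ch k = card {i \<in> I. h i = k}" for k
  have "card {k \<in> {..<n}. ch k = y} = card {k \<in> {..<n}. cg k = y}" for y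
  proof -
    have "\<forall>k<n. cg k \<in> {card I div n, card I div n + 1}" "\<forall>k<n. ch k \<in> {card I div n, card I div n + 1}"
      and "card {k \<in> {..<n}. cg k = card I div n + 1} = card {k \<in> {..<n}. ch k = card I div n + 1}"
      using balanced_card_cases[OF fin g n] balanced_card_cases[OF fin h n] unfolding cg_def ch_def by simp_all
    then show ?thesis
      using card_fibres_two_valued[of n cg "card I div n" y] card_fibres_two_valued[of n ch "card I div n" y]
      by simp
  qed
  then obtain \<pi> where \<pi>: "bij_betw \<pi> {..<n} {..<n}" and c\<pi>: "\<forall>k\<in>{..<n}. cg (\<pi> k) = ch k"
    using ex_fibre_preserving_bij_betw[of "{..<n}" "{..<n}" ch cg] by auto
  have "card {i \<in> I. \<pi> (h i) = y} = card {i \<in> I. g i = y}" for y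
  proof (cases "y \<in> \<pi> ` {..<n}")
    case True
    then obtain k where k: "k < n" and y: "y = \<pi> k"
      by auto
    have "\<pi> (h i) = \<pi> k \<longleftrightarrow> h i = k" if "i \<in> I" for i
      using \<pi> h(1) that k by (auto simp: bij_betw_def inj_on_def)
    then have "{i \<in> I. \<pi> (h i) = y} = {i \<in> I. h i = k}"
      using y by auto
    then show ?thesis
      using c\<pi> k y unfolding cg_def ch_def by simp
  next
    case False
    then have "{i \<in> I. \<pi> (h i) = y} = {}" "{i \<in> I. g i = y} = {}"
      using h(1) g(1) bij_betw_imp_surj_on[OF \<pi>] by auto
    then show ?thesis
      by (simp only:)
  qed
  then obtain \<sigma> where "bij_betw \<sigma> I I" "\<forall>i\<in>I. g (\<sigma> i) = \<pi> (h i)"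
    using ex_fibre_preserving_bij_betw[OF fin fin, of "\<lambda>i. \<pi> (h i)" g] by auto
  with \<pi> show ?thesis
    by blast
qed

lemma nonorth_pairs_eq_min_imp_cyclic_axes:
  fixes x :: "nat \<Rightarrow> real^'n"
  assumes unit: "\<forall>i<N. norm (x i) = 1" and eq: "nonorth_pairs x {..<N} = min_nonorth_pairs CARD('n) N"
  shows "\<exists>w \<sigma>. orthonormal_basis w \<and> bij_betw \<sigma> {..<N} {..<N} \<and>
    (\<forall>i<N. x (\<sigma> i) \<in> {w (i mod CARD('n)), - w (i mod CARD('n))})"
proof -
  obtain v g where ob: "orthonormal_basis v" and axes: "on_axes v g x {..<N}"
    and bal: "balanced g {..<N} CARD('n)"
    using nonorth_pairs_eq_min_imp_balanced_axes[of "{..<N}" x] unit eq by auto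
  have "\<forall>i\<in>{..<N}. g i < CARD('n)"
    using axes unfolding on_axes_def by blast
  then obtain \<pi> \<sigma> where \<pi>: "bij_betw \<pi> {..<CARD('n)} {..<CARD('n)}" and \<sigma>: "bij_betw \<sigma> {..<N} {..<N}"
    and g\<sigma>: "\<forall>i\<in>{..<N}. g (\<sigma> i) = \<pi> (i mod CARD('n))"
    using balanced_labellings_conjugate[of "{..<N}" "CARD('n)" g "\<lambda>i. i mod CARD('n)"] bal balanced_mod
    by auto
  have "x (\<sigma> i) \<in> {(v \<circ> \<pi>) (i mod CARD('n)), - (v \<circ> \<pi>) (i mod CARD('n))}" if "i < N" for i
  proof -
    have "\<sigma> i \<in> {..<N}"
      using bij_betw_apply[OF \<sigma>] that by simp
    then have "x (\<sigma> i) \<in> {v (g (\<sigma> i)), - v (g (\<sigma> i))}"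
      using axes unfolding on_axes_def by blast
    moreover have "g (\<sigma> i) = \<pi> (i mod CARD('n))"
      using g\<sigma> that by simp
    ultimately show ?thesis
      by simp
  qed
  then show ?thesis
    using orthonormal_basis_permute[OF ob \<pi>] \<sigma> by blast
qed

section \<open>Energy of finitely supported measures\<close>

lemma set_pmf_subset_image:
  fixes \<mu> :: "'a pmf" and J :: "'j set"
  assumes fin: "finite J" and m: "\<forall>A. measure (measure_pmf \<mu>) A = (\<Sum>j\<in>J. w j * indicator A (z j))"
  shows "set_pmf \<mu> \<subseteq> z ` J"
proof
  fix s assume s: "s \<in> set_pmf \<mu>"
  show "s \<in> z ` J"
  proof (rule ccontr)
    assume "s \<notin> z ` J"
    then have "(\<Sum>j\<in>J. w j * indicator {s} (z j)) = (0::real)"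
      by (intro sum.neutral) (auto simp: indicator_def)
    then have "pmf \<mu> s = 0"
      using m[rule_format, of "{s}"] by (simp add: measure_pmf_single)
    then show False
      using s by (simp add: pmf_eq_0_set_pmf)
  qed
qed

lemma pmf_expectation_eq_sum:
  fixes \<mu> :: "'a pmf" and J :: "'j set" and f :: "'a \<Rightarrow> real"
  assumes fin: "finite J" and m: "\<forall>A. measure (measure_pmf \<mu>) A = (\<Sum>j\<in>J. w j * indicator A (z j))"
  shows "measure_pmf.expectation \<mu> f = (\<Sum>j\<in>J. w j * f (z j))"
proof -
  have pmf: "pmf \<mu> s = (\<Sum>j\<in>J. w j * indicator {s} (z j))" for s
    using m[rule_format, of "{s}"] by (simp add: measure_pmf_single)
  have fz: "finite (z ` J)"
    using fin by simp
  have "measure_pmf.expectation \<mu> f = (\<Sum>s\<in>z ` J. pmf \<mu> s *\<^sub>R f s)"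
    by (rule integral_measure_pmf[OF fz]) (use set_pmf_subset_image[OF fin m] in auto)
  also have "\<dots> = (\<Sum>j\<in>J. w j * (\<Sum>s\<in>z ` J. indicator {s} (z j) * f s))"
    unfolding pmf by (simp add: sum_distrib_right sum_distrib_left mult.assoc sum.swap[of _ "z ` J"])
  also have "\<dots> = (\<Sum>j\<in>J. w j * f (z j))"
  proof (rule sum.cong[OF refl])
    fix j assume "j \<in> J"
    then have "(\<Sum>s\<in>z ` J. indicator {s} (z j) * f s) = (\<Sum>s\<in>z ` J. if z j = s then f s else 0)"
      by (intro sum.cong) (auto simp: indicator_def)
    also have "\<dots> = f (z j)"
      using \<open>j \<in> J\<close> fz by (simp add: sum.delta)
    finally show "w j * (\<Sum>s\<in>z ` J. indicator {s} (z j) * f s) = w j * f (z j)"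
      by simp
  qed
  finally show ?thesis .
qed

lemma E_inf_eq_sum:
  fixes \<mu> :: "(real^'n) pmf" and J :: "'j set"
  assumes "finite J" and "\<forall>A. measure (measure_pmf \<mu>) A = (\<Sum>j\<in>J. w j * indicator A (z j))"
  shows "E_inf \<mu> = 1/2 * (\<Sum>i\<in>J. w i * (\<Sum>j\<in>J. w j * Lambda_inf (z i) (z j)))"
  unfolding E_inf_def by (simp add: pmf_expectation_eq_sum[OF assms])

lemma E_inf_empirical:
  fixes \<mu> :: "(real^'n) pmf"
  assumes "is_empirical \<mu> N x"
  shows "E_inf \<mu> = (real N ^ 2 - real (nonorth_pairs x {..<N})) / (2 * real N ^ 2)"
proof -
  have "\<forall>A. measure (measure_pmf \<mu>) A = (\<Sum>j<N. 1 / real N * indicator A (x j))"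
    using assms unfolding is_empirical_def by (simp add: sum_distrib_left)
  then have "E_inf \<mu> = 1/2 * (\<Sum>i<N. 1 / real N * (\<Sum>j<N. 1 / real N * Lambda_inf (x i) (x j)))"
    by (rule E_inf_eq_sum[OF finite_lessThan])
  then have E: "E_inf \<mu> = 1/2 * (1 / real N) * (1 / real N) * (\<Sum>i<N. \<Sum>j<N. Lambda_inf (x i) (x j))"
    by (simp add: sum_distrib_left mult.assoc)
  have row: "(\<Sum>j<N. Lambda_inf (x i) (x j)) = real N - real (nonorth_degree x {..<N} i)" for i
  proof -
    have "(\<Sum>j<N. Lambda_inf (x i) (x j)) = (\<Sum>j<N. 1 - (if x i \<bullet> x j \<noteq> 0 then 1 else 0))"
      by (rule sum.cong) (auto simp: Lambda_inf_def)
    also have "\<dots> = real N - real (nonorth_degree x {..<N} i)"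
      unfolding nonorth_degree_def of_nat_card_filter[OF finite_lessThan] by (simp add: sum_subtractf)
    finally show ?thesis .
  qed
  have "(\<Sum>i<N. \<Sum>j<N. Lambda_inf (x i) (x j)) = real N * real N - real (nonorth_pairs x {..<N})"
    unfolding row nonorth_pairs_def by (simp add: sum_subtractf)
  then show ?thesis
    unfolding E by (simp add: power2_eq_square field_simps)
qed

lemma is_empirical_map_pmf_of_set:
  fixes x :: "nat \<Rightarrow> real^'n"
  assumes "N \<ge> 1"
  shows "is_empirical (map_pmf x (pmf_of_set {..<N})) N x"
  unfolding is_empirical_def
proof
  fix A
  have ne: "{..<N} \<noteq> {}"
    using assms by (simp add: lessThan_empty_iff)
  have "(\<Sum>i<N. indicator A (x i) :: real) = (\<Sum>i<N. if i \<in> x -` A then 1 else 0)"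
    by (rule sum.cong) (auto simp: indicator_def)
  also have "\<dots> = real (card ({..<N} \<inter> x -` A))"
    using of_nat_card_filter[of "{..<N}" "\<lambda>i. i \<in> x -` A", where 'b = real] by (simp add: Int_def)
  finally show "measure (measure_pmf (map_pmf x (pmf_of_set {..<N}))) A = 1 / real N * (\<Sum>i<N. indicator A (x i))"
    using measure_pmf_of_set[OF ne] by simp
qed

lemma is_empirical_reindex:
  assumes "is_empirical \<mu> N x" and "bij_betw \<sigma> {..<N} {..<N}"
  shows "is_empirical \<mu> N (x \<circ> \<sigma>)"
  unfolding is_empirical_def
proof
  fix A
  have "(\<Sum>i<N. indicator A ((x \<circ> \<sigma>) i) :: real) = (\<Sum>i<N. indicator A (x i))"
    using sum.reindex_bij_betw[OF assms(2), of "\<lambda>i. indicator A (x i) :: real"] by simp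
  then show "measure (measure_pmf \<mu>) A = 1 / real N * (\<Sum>i<N. indicator A ((x \<circ> \<sigma>) i))"
    using assms(1) unfolding is_empirical_def by simp
qed

lemma E_inf_empirical_le_iff:
  assumes "is_empirical \<mu> N x" and "is_empirical \<nu> N y" and "N \<ge> 1"
  shows "E_inf \<nu> \<le> E_inf \<mu> \<longleftrightarrow> nonorth_pairs x {..<N} \<le> nonorth_pairs y {..<N}"
  using assms by (simp add: E_inf_empirical divide_le_cancel)

section \<open>Maximizers with \<open>N\<close> equal weights\<close>

lemma min_nonorth_pairs_le_sphere:
  fixes x :: "nat \<Rightarrow> real^'n"
  assumes "\<forall>i<N. x i \<in> sphere 0 1"
  shows "min_nonorth_pairs CARD('n) N \<le> nonorth_pairs x {..<N}"
proof -
  have "min_nonorth_pairs CARD('n) (card {..<N}) \<le> nonorth_pairs x {..<N}"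
    by (rule min_nonorth_pairs_le) (use assms in auto)
  then show ?thesis
    by simp
qed

lemma maximizes_on_P_N_eq_iff_min_nonorth_pairs:
  fixes \<mu> :: "(real^'n) pmf"
  assumes N: "N \<ge> 1"
  shows "maximizes_on E_inf (P_N_eq N) \<mu> \<longleftrightarrow>
     (\<exists>x. (\<forall>i<N. x i \<in> sphere 0 1) \<and> is_empirical \<mu> N x \<and>
        nonorth_pairs x {..<N} = min_nonorth_pairs CARD('n) N)"
proof
  assume max: "maximizes_on E_inf (P_N_eq N) \<mu>"
  then obtain x where x: "\<forall>i<N. x i \<in> sphere 0 1" and \<mu>: "is_empirical \<mu> N x"
    unfolding maximizes_on_def P_N_eq_def by blast
  obtain v :: "nat \<Rightarrow> real^'n" where ob: "orthonormal_basis v"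
    using ex_orthonormal_basis by blast
  define z where "z i = v (i mod CARD('n))" for i
  have "\<forall>i<N. z i \<in> sphere 0 1"
    unfolding z_def using orthonormal_basis_norm[OF ob] by simp
  moreover have \<nu>: "is_empirical (map_pmf z (pmf_of_set {..<N})) N z"
    by (rule is_empirical_map_pmf_of_set[OF N])
  ultimately have "E_inf (map_pmf z (pmf_of_set {..<N})) \<le> E_inf \<mu>"
    using max unfolding maximizes_on_def P_N_eq_def by blast
  moreover have "nonorth_pairs z {..<N} = min_nonorth_pairs CARD('n) N"
    by (rule nonorth_pairs_cyclic_axes[OF ob]) (simp add: z_def)
  ultimately show "\<exists>x. (\<forall>i<N. x i \<in> sphere 0 1) \<and> is_empirical \<mu> N x \<and>
      nonorth_pairs x {..<N} = min_nonorth_pairs CARD('n) N"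
    using E_inf_empirical_le_iff[OF \<mu> \<nu> N] min_nonorth_pairs_le_sphere[OF x] x \<mu> by auto
next
  assume "\<exists>x. (\<forall>i<N. x i \<in> sphere 0 1) \<and> is_empirical \<mu> N x \<and>
      nonorth_pairs x {..<N} = min_nonorth_pairs CARD('n) N"
  then obtain x where x: "\<forall>i<N. x i \<in> sphere 0 1" and \<mu>: "is_empirical \<mu> N x"
    and x_min: "nonorth_pairs x {..<N} = min_nonorth_pairs CARD('n) N"
    by blast
  have "E_inf \<nu> \<le> E_inf \<mu>" if "\<nu> \<in> P_N_eq N" for \<nu> :: "(real^'n) pmf"
  proof -
    obtain y where y: "\<forall>i<N. y i \<in> sphere 0 1" and \<nu>: "is_empirical \<nu> N y"
      using \<open>\<nu> \<in> P_N_eq N\<close> unfolding P_N_eq_def by blast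
    show ?thesis
      using E_inf_empirical_le_iff[OF \<mu> \<nu> N] min_nonorth_pairs_le_sphere[OF y] x_min by simp
  qed
  then show "maximizes_on E_inf (P_N_eq N) \<mu>"
    unfolding maximizes_on_def P_N_eq_def using x \<mu> by blast
qed

lemma maximizes_on_P_N_eq_iff:
  fixes \<mu> :: "(real^'n) pmf"
  assumes N: "N \<ge> 1"
  shows "maximizes_on E_inf (P_N_eq N) \<mu> \<longleftrightarrow>
     (\<exists>v x. orthonormal_basis v \<and> (\<forall>i<N. x i \<in> sphere 0 1) \<and> is_empirical \<mu> N x \<and>
        (\<forall>i<N. x i \<in> {v (i mod CARD('n)), - v (i mod CARD('n))}))"
  unfolding maximizes_on_P_N_eq_iff_min_nonorth_pairs[OF N]
proof safe
  fix x assume x: "\<forall>i<N. x i \<in> sphere 0 1" and \<mu>: "is_empirical \<mu> N x"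
    and "nonorth_pairs x {..<N} = min_nonorth_pairs CARD('n) N"
  then obtain w \<sigma> where "orthonormal_basis w" and \<sigma>: "bij_betw \<sigma> {..<N} {..<N}"
    and "\<forall>i<N. (x \<circ> \<sigma>) i \<in> {w (i mod CARD('n)), - w (i mod CARD('n))}"
    using nonorth_pairs_eq_min_imp_cyclic_axes[of N x] by auto
  moreover have "\<forall>i<N. (x \<circ> \<sigma>) i \<in> sphere 0 1"
    using x bij_betw_apply[OF \<sigma>] by auto
  ultimately show "\<exists>v x. orthonormal_basis v \<and> (\<forall>i<N. x i \<in> sphere 0 1) \<and> is_empirical \<mu> N x \<and>
      (\<forall>i<N. x i \<in> {v (i mod CARD('n)), - v (i mod CARD('n))})"
    using is_empirical_reindex[OF \<mu> \<sigma>] by blast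
next
  fix v x assume "orthonormal_basis v" and "\<forall>i<N. x i \<in> sphere 0 1" and "is_empirical \<mu> N x"
    and "\<forall>i<N. x i \<in> {v (i mod CARD('n)), - v (i mod CARD('n))}"
  then show "\<exists>x. (\<forall>i<N. x i \<in> sphere 0 1) \<and> is_empirical \<mu> N x \<and>
      nonorth_pairs x {..<N} = min_nonorth_pairs CARD('n) N"
    using nonorth_pairs_cyclic_axes by blast
qed

section \<open>The frame-potential bound\<close>

definition moment_matrix :: "(real^'n) set \<Rightarrow> (real^'n \<Rightarrow> real) \<Rightarrow> 'n \<Rightarrow> 'n \<Rightarrow> real" where
  "moment_matrix S p k l = (\<Sum>s\<in>S. p s * (s$k * s$l))"

lemma sum_inner_square_eq_moment_matrix:
  fixes S :: "(real^'n) set"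
  shows "(\<Sum>s\<in>S. p s * (s \<bullet> u)\<^sup>2) = (\<Sum>k\<in>UNIV. \<Sum>l\<in>UNIV. u$k * u$l * moment_matrix S p k l)"
proof -
  have "(\<Sum>s\<in>S. p s * (s \<bullet> u)\<^sup>2) = (\<Sum>s\<in>S. \<Sum>k\<in>UNIV. \<Sum>l\<in>UNIV. u$k * u$l * (p s * (s$k * s$l)))"
    by (simp add: inner_vec_def power2_eq_square sum_product sum_distrib_left mult_ac)
  also have "\<dots> = (\<Sum>k\<in>UNIV. \<Sum>l\<in>UNIV. \<Sum>s\<in>S. u$k * u$l * (p s * (s$k * s$l)))"
    by (subst sum.swap) (simp add: sum.swap[of _ S])
  finally show ?thesis
    by (simp add: moment_matrix_def sum_distrib_left)
qed

lemma frame_potential_eq_moment_matrix: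
  fixes S :: "(real^'n) set"
  shows "(\<Sum>s\<in>S. p s * (\<Sum>t\<in>S. p t * (s \<bullet> t)\<^sup>2)) = (\<Sum>k\<in>UNIV. \<Sum>l\<in>UNIV. (moment_matrix S p k l)\<^sup>2)"
proof -
  have "(\<Sum>s\<in>S. p s * (\<Sum>t\<in>S. p t * (s \<bullet> t)\<^sup>2)) =
      (\<Sum>s\<in>S. \<Sum>k\<in>UNIV. \<Sum>l\<in>UNIV. moment_matrix S p k l * (p s * (s$k * s$l)))"
    using sum_inner_square_eq_moment_matrix[where S = S and p = p] by (simp add: inner_commute sum_distrib_left mult_ac)
  also have "\<dots> = (\<Sum>k\<in>UNIV. \<Sum>l\<in>UNIV. \<Sum>s\<in>S. moment_matrix S p k l * (p s * (s$k * s$l)))"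
    by (subst sum.swap) (simp add: sum.swap[of _ S])
  finally show ?thesis
    by (simp add: moment_matrix_def sum_distrib_left power2_eq_square)
qed

lemma trace_moment_matrix:
  fixes S :: "(real^'n) set"
  assumes "\<forall>s\<in>S. norm s = 1" and "(\<Sum>s\<in>S. p s) = 1"
  shows "(\<Sum>k\<in>UNIV. moment_matrix S p k k) = 1"
proof -
  have "(\<Sum>k\<in>UNIV. moment_matrix S p k k) = (\<Sum>s\<in>S. p s * (s \<bullet> s))"
    unfolding moment_matrix_def by (subst sum.swap) (simp add: inner_vec_def sum_distrib_left)
  also have "\<dots> = (\<Sum>s\<in>S. p s)"
    by (rule sum.cong[OF refl]) (use assms(1) in \<open>simp add: dot_square_norm\<close>)
  finally show ?thesis
    using assms(2) by simp
qed

lemma dist_moment_matrix_scaled_identity: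
  fixes S :: "(real^'n) set"
  assumes "\<forall>s\<in>S. norm s = 1" and "(\<Sum>s\<in>S. p s) = 1"
  shows "(\<Sum>k\<in>UNIV. \<Sum>l\<in>UNIV. (moment_matrix S p k l - (if k = l then 1 / real CARD('n) else 0))\<^sup>2)
      = (\<Sum>k\<in>UNIV. \<Sum>l\<in>UNIV. (moment_matrix S p k l)\<^sup>2) - 1 / real CARD('n)"
proof -
  let ?M = "moment_matrix S p" and ?c = "1 / real CARD('n)"
  define d where "d k l = (if k = l then ?c else 0)" for k l :: 'n
  have sq: "(?M k l - d k l)\<^sup>2 = (?M k l)\<^sup>2 - 2 * (?M k l * d k l) + (d k l)\<^sup>2" for k l
    by (simp add: power2_eq_square algebra_simps)
  have "(\<Sum>k\<in>UNIV. \<Sum>l\<in>UNIV. ?M k l * d k l) = ?c * (\<Sum>k\<in>UNIV. ?M k k)"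
    unfolding d_def by (simp add: if_distrib sum_distrib_left mult.commute cong: if_cong)
  also have "\<dots> = ?c"
    using trace_moment_matrix[OF assms] by simp
  finally have cross: "(\<Sum>k\<in>UNIV. \<Sum>l\<in>UNIV. ?M k l * d k l) = ?c" .
  have "(d k l)\<^sup>2 = (if k = l then ?c\<^sup>2 else 0)" for k l
    unfolding d_def by simp
  then have "(\<Sum>k\<in>UNIV. \<Sum>l\<in>UNIV. (d k l)\<^sup>2) = real CARD('n) * ?c\<^sup>2"
    by simp
  also have "\<dots> = ?c"
    by (simp add: power2_eq_square)
  finally have diag: "(\<Sum>k\<in>UNIV. \<Sum>l\<in>UNIV. (d k l)\<^sup>2) = ?c" .
  show ?thesis
    unfolding d_def[symmetric] sq using cross diag
    by (simp add: sum.distrib sum_subtractf sum_distrib_left[symmetric])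
qed

lemma Lambda_inf_le_one_minus_inner_square:
  fixes s t :: "real^'n"
  assumes "norm s = 1" "norm t = 1"
  shows "Lambda_inf s t \<le> 1 - (s \<bullet> t)\<^sup>2"
proof -
  have "\<bar>s \<bullet> t\<bar> \<le> 1"
    using Cauchy_Schwarz_ineq2[of s t] assms by simp
  then have "(s \<bullet> t)\<^sup>2 \<le> 1"
    by (simp add: abs_square_le_1)
  then show ?thesis
    by (auto simp: Lambda_inf_def)
qed

text \<open>The two subtracted terms are nonnegative; the bound is attained iff both vanish.\<close>

lemma frame_identity:
  fixes S :: "(real^'n) set"
  assumes unit: "\<forall>s\<in>S. norm s = 1" and total: "(\<Sum>s\<in>S. p s) = 1"
  shows "(\<Sum>s\<in>S. p s * (\<Sum>t\<in>S. p t * Lambda_inf s t)) = 1 - 1 / real CARD('n)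
     - (\<Sum>s\<in>S. p s * (\<Sum>t\<in>S. p t * (1 - (s \<bullet> t)\<^sup>2 - Lambda_inf s t)))
     - (\<Sum>k\<in>UNIV. \<Sum>l\<in>UNIV. (moment_matrix S p k l - (if k = l then 1 / real CARD('n) else 0))\<^sup>2)"
proof -
  have "(\<Sum>s\<in>S. p s * (\<Sum>t\<in>S. p t * (1 - (s \<bullet> t)\<^sup>2 - Lambda_inf s t)))
     = (\<Sum>s\<in>S. p s) * (\<Sum>t\<in>S. p t) - (\<Sum>s\<in>S. p s * (\<Sum>t\<in>S. p t * (s \<bullet> t)\<^sup>2))
       - (\<Sum>s\<in>S. p s * (\<Sum>t\<in>S. p t * Lambda_inf s t))"
    by (simp add: algebra_simps sum_subtractf sum_distrib_left sum_distrib_right sum.distrib)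
  then show ?thesis
    using frame_potential_eq_moment_matrix[where S = S and p = p] dist_moment_matrix_scaled_identity[OF unit total] total
    by simp
qed

lemma measure_pmf_eq_sum_set_pmf:
  fixes \<mu> :: "'a pmf"
  assumes "finite (set_pmf \<mu>)"
  shows "measure (measure_pmf \<mu>) A = (\<Sum>s\<in>set_pmf \<mu>. pmf \<mu> s * indicator A s)"
proof -
  have "measure (measure_pmf \<mu>) A = measure (measure_pmf \<mu>) (set_pmf \<mu> \<inter> A)"
    using measure_Int_set_pmf[of \<mu> A] by (simp add: Int_commute)
  also have "\<dots> = sum (pmf \<mu>) (set_pmf \<mu> \<inter> A)"
    by (rule measure_measure_pmf_finite) (use assms in simp)
  also have "\<dots> = (\<Sum>s\<in>set_pmf \<mu>. if s \<in> A then pmf \<mu> s else 0)"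
    by (rule sum.inter_restrict[OF assms])
  also have "\<dots> = (\<Sum>s\<in>set_pmf \<mu>. pmf \<mu> s * indicator A s)"
    by (rule sum.cong) (auto simp: indicator_def)
  finally show ?thesis .
qed

lemma E_inf_eq_sum_set_pmf:
  fixes \<mu> :: "(real^'n) pmf"
  assumes "finite (set_pmf \<mu>)"
  shows "E_inf \<mu> = 1/2 * (\<Sum>s\<in>set_pmf \<mu>. pmf \<mu> s * (\<Sum>t\<in>set_pmf \<mu>. pmf \<mu> t * Lambda_inf s t))"
  using E_inf_eq_sum[of "set_pmf \<mu>" \<mu> "pmf \<mu>" "\<lambda>s. s"] measure_pmf_eq_sum_set_pmf[OF assms] assms
  by simp

lemma P_fin_frame_identity:
  fixes \<mu> :: "(real^'n) pmf"
  assumes "\<mu> \<in> P_fin"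
  defines "S \<equiv> set_pmf \<mu>"
  shows "2 * E_inf \<mu> = 1 - 1 / real CARD('n)
     - (\<Sum>s\<in>S. pmf \<mu> s * (\<Sum>t\<in>S. pmf \<mu> t * (1 - (s \<bullet> t)\<^sup>2 - Lambda_inf s t)))
     - (\<Sum>k\<in>UNIV. \<Sum>l\<in>UNIV. (moment_matrix S (pmf \<mu>) k l - (if k = l then 1 / real CARD('n) else 0))\<^sup>2)"
    and "0 \<le> (\<Sum>s\<in>S. pmf \<mu> s * (\<Sum>t\<in>S. pmf \<mu> t * (1 - (s \<bullet> t)\<^sup>2 - Lambda_inf s t)))"
proof -
  have fin: "finite S" and unit: "\<forall>s\<in>S. norm s = 1"
    using assms unfolding P_fin_def S_def by auto
  have "(\<Sum>s\<in>S. pmf \<mu> s) = 1"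
    unfolding S_def by (rule sum_pmf_eq_1) (use fin S_def in auto)
  then show "2 * E_inf \<mu> = 1 - 1 / real CARD('n)
     - (\<Sum>s\<in>S. pmf \<mu> s * (\<Sum>t\<in>S. pmf \<mu> t * (1 - (s \<bullet> t)\<^sup>2 - Lambda_inf s t)))
     - (\<Sum>k\<in>UNIV. \<Sum>l\<in>UNIV. (moment_matrix S (pmf \<mu>) k l - (if k = l then 1 / real CARD('n) else 0))\<^sup>2)"
    using frame_identity[OF unit] E_inf_eq_sum_set_pmf[of \<mu>] fin unfolding S_def by simp
  show "0 \<le> (\<Sum>s\<in>S. pmf \<mu> s * (\<Sum>t\<in>S. pmf \<mu> t * (1 - (s \<bullet> t)\<^sup>2 - Lambda_inf s t)))"
    using Lambda_inf_le_one_minus_inner_square unit by (intro sum_nonneg mult_nonneg_nonneg) auto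
qed

lemma E_inf_le_frame_bound:
  fixes \<mu> :: "(real^'n) pmf"
  assumes "\<mu> \<in> P_fin"
  shows "E_inf \<mu> \<le> 1/2 * (1 - 1 / real CARD('n))"
proof -
  have "0 \<le> (\<Sum>k\<in>UNIV. \<Sum>l\<in>UNIV.
      (moment_matrix (set_pmf \<mu>) (pmf \<mu>) k l - (if k = l then 1 / real CARD('n) else 0))\<^sup>2)"
    by (intro sum_nonneg) simp
  then have "2 * E_inf \<mu> \<le> 1 - 1 / real CARD('n)"
    using P_fin_frame_identity[OF assms] by linarith
  then show ?thesis
    by simp
qed

section \<open>Equality in the frame-potential bound\<close>

lemma nested_sum_eq_0_imp:
  fixes S :: "'a set" and p :: "'a \<Rightarrow> real"
  assumes fin: "finite S" and pos: "\<forall>s\<in>S. 0 < p s" and nonneg: "\<forall>s\<in>S. \<forall>t\<in>S. 0 \<le> Y s t"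
    and zero: "(\<Sum>s\<in>S. p s * (\<Sum>t\<in>S. p t * Y s t)) = 0"
  shows "\<forall>s\<in>S. \<forall>t\<in>S. Y s t = 0"
proof (intro ballI)
  fix s t assume s: "s \<in> S" and t: "t \<in> S"
  have terms: "0 \<le> p t * Y s t" if "s \<in> S" "t \<in> S" for s t
    using pos nonneg that by (simp add: less_imp_le)
  have rows: "0 \<le> p s * (\<Sum>t\<in>S. p t * Y s t)" if "s \<in> S" for s
    using pos terms that by (simp add: less_imp_le sum_nonneg)
  have "p s * (\<Sum>t\<in>S. p t * Y s t) = 0"
    using sum_nonneg_eq_0_iff[OF fin, of "\<lambda>s. p s * (\<Sum>t\<in>S. p t * Y s t)"] rows zero s by blast
  then have "(\<Sum>t\<in>S. p t * Y s t) = 0"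
    using pos[rule_format, OF s] by simp
  then have "p t * Y s t = 0"
    using sum_nonneg_eq_0_iff[OF fin, of "\<lambda>t. p t * Y s t"] terms s t by blast
  then show "Y s t = 0"
    using pos[rule_format, OF t] by simp
qed

lemma neg_neq_self:
  fixes x :: "'a :: real_inner"
  assumes "x \<noteq> 0"
  shows "x \<noteq> - x"
proof
  assume "x = - x"
  then have "x \<bullet> x = - (x \<bullet> x)"
    by (metis inner_minus_right)
  then show False
    using assms by simp
qed

lemma frame_bound_attained_imp_tight:
  fixes \<mu> :: "(real^'n) pmf"
  assumes P: "\<mu> \<in> P_fin" and E: "1/2 * (1 - 1 / real CARD('n)) \<le> E_inf \<mu>"
  shows "\<forall>s\<in>set_pmf \<mu>. \<forall>t\<in>set_pmf \<mu>. Lambda_inf s t = 1 - (s \<bullet> t)\<^sup>2"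
    and "moment_matrix (set_pmf \<mu>) (pmf \<mu>) k l = (if k = l then 1 / real CARD('n) else 0)"
proof -
  let ?S = "set_pmf \<mu>" and ?c = "1 / real CARD('n)"
  define D where "D k l = (moment_matrix ?S (pmf \<mu>) k l - (if k = l then ?c else 0))\<^sup>2" for k l
  have "0 \<le> (\<Sum>k\<in>UNIV. \<Sum>l\<in>UNIV. D k l)"
    unfolding D_def by (intro sum_nonneg) simp
  moreover have "1 - ?c \<le> 2 * E_inf \<mu>"
    using E by simp
  ultimately have D1: "(\<Sum>s\<in>?S. pmf \<mu> s * (\<Sum>t\<in>?S. pmf \<mu> t * (1 - (s \<bullet> t)\<^sup>2 - Lambda_inf s t))) = 0"
    and D2: "(\<Sum>k\<in>UNIV. \<Sum>l\<in>UNIV. D k l) = 0"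
    using P_fin_frame_identity[OF P] E unfolding D_def by linarith+
  have fin: "finite ?S" and unit: "\<forall>s\<in>?S. norm s = 1"
    using P unfolding P_fin_def by auto
  have "\<forall>s\<in>?S. \<forall>t\<in>?S. 1 - (s \<bullet> t)\<^sup>2 - Lambda_inf s t = 0"
    using Lambda_inf_le_one_minus_inner_square unit
    by (intro nested_sum_eq_0_imp[OF fin _ _ D1]) (auto simp: pmf_positive)
  then show "\<forall>s\<in>?S. \<forall>t\<in>?S. Lambda_inf s t = 1 - (s \<bullet> t)\<^sup>2"
    by simp
  have "\<forall>k. (\<Sum>l\<in>UNIV. D k l) = 0"
    using D2 sum_nonneg_eq_0_iff[of UNIV "\<lambda>k. \<Sum>l\<in>UNIV. D k l"] unfolding D_def by (simp add: sum_nonneg)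
  then have "D k l = 0"
    using sum_nonneg_eq_0_iff[of UNIV "D k"] unfolding D_def by simp
  then show "moment_matrix ?S (pmf \<mu>) k l = (if k = l then ?c else 0)"
    unfolding D_def by simp
qed

lemma sum_inner_square_isotropic:
  fixes S :: "(real^'n) set"
  assumes "\<And>k l. moment_matrix S p k l = (if k = l then 1 / real CARD('n) else 0)"
  shows "(\<Sum>s\<in>S. p s * (s \<bullet> u)\<^sup>2) = (u \<bullet> u) / real CARD('n)"
proof -
  have "(\<Sum>s\<in>S. p s * (s \<bullet> u)\<^sup>2) = (\<Sum>k\<in>UNIV. u$k * u$k / real CARD('n))"
    unfolding sum_inner_square_eq_moment_matrix assms by (simp add: if_distrib cong: if_cong)
  also have "\<dots> = (u \<bullet> u) / real CARD('n)"
    by (simp add: inner_vec_def sum_divide_distrib)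
  finally show ?thesis .
qed

lemma axis_mass_of_tight_frame:
  fixes S :: "(real^'n) set"
  assumes fin: "finite S" and unit: "\<forall>s\<in>S. norm s = 1"
    and pm: "\<forall>s\<in>S. \<forall>t\<in>S. s \<bullet> t \<noteq> 0 \<longrightarrow> s \<in> {t, - t}"
    and M: "\<And>k l. moment_matrix S p k l = (if k = l then 1 / real CARD('n) else 0)"
    and outside: "\<forall>s. s \<notin> S \<longrightarrow> p s = 0" and u: "u \<in> S"
  shows "p u + p (- u) = 1 / real CARD('n)"
proof -
  have uu: "u \<bullet> u = 1"
    using unit u by (simp add: dot_square_norm)
  have "(s \<bullet> u)\<^sup>2 = indicator {u, - u} s" if "s \<in> S" for s
  proof (cases "s \<bullet> u = 0")
    case True
    then have "s \<noteq> u" "s \<noteq> - u"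
      using uu by auto
    then show ?thesis
      using True by (simp add: indicator_def)
  next
    case False
    then have "s \<in> {u, - u}"
      using pm that u by blast
    then show ?thesis
      using uu by (auto simp: indicator_def)
  qed
  then have "(\<Sum>s\<in>S. p s * (s \<bullet> u)\<^sup>2) = (\<Sum>s\<in>S. p s * indicator {u, - u} s)"
    by simp
  also have "\<dots> = (\<Sum>s\<in>{u, - u}. p s)"
    using fin outside by (intro sum.mono_neutral_cong) (auto simp: indicator_def)
  also have "\<dots> = p u + p (- u)"
  proof -
    have "u \<noteq> 0"
      using uu by auto
    then have "u \<noteq> - u"
      by (rule neg_neq_self)
    then show ?thesis
      by simp
  qed
  finally show ?thesis
    using sum_inner_square_isotropic[OF M, of u] uu by simp
qed

lemma sum_over_axes:
  fixes R S :: "(real^'n) set" and f :: "real^'n \<Rightarrow> real"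
  assumes fin: "finite R" and orth: "\<forall>a\<in>R. \<forall>b\<in>R. a \<noteq> b \<longrightarrow> a \<bullet> b = 0"
    and unit: "\<forall>r\<in>R. norm r = 1" and cover: "S \<subseteq> (\<Union>r\<in>R. {r, - r})"
    and outside: "\<forall>s. s \<notin> S \<longrightarrow> p s = 0"
  shows "(\<Sum>s\<in>S. p s * f s) = (\<Sum>r\<in>R. p r * f r + p (- r) * f (- r))"
proof -
  have neg: "r \<noteq> - r" if "r \<in> R" for r
    using unit that by (intro neg_neq_self) auto
  have disj: "{r1, - r1} \<inter> {r2, - r2} = {}" if "r1 \<in> R" "r2 \<in> R" "r1 \<noteq> r2" for r1 r2
  proof -
    have "r1 \<bullet> r2 = 0" "r1 \<bullet> r1 = 1"
      using orth unit that by (auto simp: dot_square_norm)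
    then have "r1 \<noteq> - r2" "- r1 \<noteq> r2"
      by auto
    then show ?thesis
      using that(3) by auto
  qed
  have "(\<Sum>s\<in>S. p s * f s) = (\<Sum>s\<in>(\<Union>r\<in>R. {r, - r}). p s * f s)"
    by (rule sum.mono_neutral_left) (use fin cover outside in auto)
  also have "\<dots> = (\<Sum>r\<in>R. \<Sum>s\<in>{r, - r}. p s * f s)"
    by (rule sum.UNION_disjoint[OF fin]) (use disj in auto)
  also have "\<dots> = (\<Sum>r\<in>R. p r * f r + p (- r) * f (- r))"
    using neg by (intro sum.cong) auto
  finally show ?thesis .
qed

text \<open>A maximal orthogonal subset \<open>R\<close> of the support meets every support point, which therefore lies
  on one of the axes through \<open>R\<close>; since each axis carries mass \<open>1/CARD('n)\<close>, \<open>R\<close> has \<open>CARD('n)\<close>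
  elements.\<close>

lemma support_on_axes:
  fixes S :: "(real^'n) set"
  assumes fin: "finite S" and unit: "\<forall>s\<in>S. norm s = 1"
    and pm: "\<forall>s\<in>S. \<forall>t\<in>S. s \<bullet> t \<noteq> 0 \<longrightarrow> s \<in> {t, - t}"
    and outside: "\<forall>s. s \<notin> S \<longrightarrow> p s = 0" and total: "(\<Sum>s\<in>S. p s) = 1"
    and mass: "\<forall>u\<in>S. p u + p (- u) = 1 / real CARD('n)"
  shows "\<exists>v. orthonormal_basis v \<and> v ` {..<CARD('n)} \<subseteq> S \<and>
    (\<forall>f. (\<Sum>s\<in>S. p s * f s) = (\<Sum>i<CARD('n). p (v i) * f (v i) + p (- v i) * f (- v i)))"
proof -
  have nz: "\<And>s. s \<in> S \<Longrightarrow> id s \<noteq> 0"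
    using unit by auto
  have "\<exists>R\<subseteq>S. (\<forall>a\<in>R. \<forall>b\<in>R. a \<noteq> b \<longrightarrow> id a \<bullet> id b = 0) \<and> (\<forall>s\<in>S. \<exists>r\<in>R. id s \<bullet> id r \<noteq> 0)"
    by (rule ex_maximal_orthogonal_subfamily[OF fin]) (rule nz)
  then obtain R where RS: "R \<subseteq> S" and orth: "\<forall>a\<in>R. \<forall>b\<in>R. a \<noteq> b \<longrightarrow> a \<bullet> b = 0"
    and cov: "\<forall>s\<in>S. \<exists>r\<in>R. s \<bullet> r \<noteq> 0"
    by auto
  have fR: "finite R"
    using RS fin finite_subset by blast
  have "S \<subseteq> (\<Union>r\<in>R. {r, - r})"
    using cov pm RS by blast
  then have sum_S: "(\<Sum>s\<in>S. p s * f s) = (\<Sum>r\<in>R. p r * f r + p (- r) * f (- r))" for f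
    using sum_over_axes[OF fR orth _ _ outside] unit RS by blast
  have "1 = (\<Sum>r\<in>R. p r + p (- r))"
    using sum_S[of "\<lambda>_. 1"] total by simp
  also have "\<dots> = (\<Sum>r\<in>R. 1 / real CARD('n))"
    using mass RS by (intro sum.cong) auto
  finally have card: "card R = CARD('n)"
    by simp
  have "pairwise orthogonal R"
    using orth by (auto simp: pairwise_def orthogonal_def)
  then obtain v where ob: "orthonormal_basis v" and vR: "v ` {..<CARD('n)} = R"
    by (rule obtain_orthonormal_basis_of_set[OF fR card]) (use unit RS in auto)
  have "inj_on v {..<CARD('n)}"
    using vR card by (intro eq_card_imp_inj_on) auto
  then have "(\<Sum>r\<in>R. g r) = (\<Sum>i<CARD('n). g (v i))" for g :: "real^'n \<Rightarrow> real"
    unfolding vR[symmetric] by (simp add: sum.reindex)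
  then show ?thesis
    using ob vR RS sum_S by auto
qed

section \<open>Maximizers among finitely supported measures\<close>

lemma axes_measure_expectation:
  fixes \<mu> :: "(real^'n) pmf"
  assumes m: "\<forall>A. measure (measure_pmf \<mu>) A =
    (\<Sum>i<CARD('n). a i * indicator A (v i) + b i * indicator A (- v i))"
  shows "measure_pmf.expectation \<mu> f = (\<Sum>i<CARD('n). a i * f (v i) + b i * f (- v i))"
    and "set_pmf \<mu> \<subseteq> v ` {..<CARD('n)} \<union> (\<lambda>i. - v i) ` {..<CARD('n)}"
proof -
  define J where "J = {..<CARD('n)} \<times> (UNIV :: bool set)"
  define w where "w = (\<lambda>(i, c). if c then a i else b i)"
  define z where "z = (\<lambda>(i, c). if c then v i else - v i)"
  have fJ: "finite J"
    by (simp add: J_def)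
  have sum_J: "(\<Sum>j\<in>J. w j * g (z j)) = (\<Sum>i<CARD('n). a i * g (v i) + b i * g (- v i))"
    for g :: "real^'n \<Rightarrow> real"
  proof -
    have "(\<Sum>j\<in>J. w j * g (z j)) = (\<Sum>i<CARD('n). \<Sum>c\<in>UNIV. w (i, c) * g (z (i, c)))"
      unfolding J_def by (subst sum.cartesian_product) (simp add: case_prod_unfold)
    also have "\<dots> = (\<Sum>i<CARD('n). a i * g (v i) + b i * g (- v i))"
      by (rule sum.cong[OF refl]) (simp add: UNIV_bool w_def z_def)
    finally show ?thesis .
  qed
  have mJ: "\<forall>A. measure (measure_pmf \<mu>) A = (\<Sum>j\<in>J. w j * indicator A (z j))"
    using m sum_J by simp
  show "measure_pmf.expectation \<mu> f = (\<Sum>i<CARD('n). a i * f (v i) + b i * f (- v i))"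
    using pmf_expectation_eq_sum[OF fJ mJ] sum_J by simp
  show "set_pmf \<mu> \<subseteq> v ` {..<CARD('n)} \<union> (\<lambda>i. - v i) ` {..<CARD('n)}"
  proof -
    have "z ` J \<subseteq> v ` {..<CARD('n)} \<union> (\<lambda>i. - v i) ` {..<CARD('n)}"
      unfolding J_def z_def by (auto split: if_splits)
    then show ?thesis
      using set_pmf_subset_image[OF fJ mJ] by blast
  qed
qed

lemma axes_measure_attains_frame_bound:
  fixes \<mu> :: "(real^'n) pmf"
  assumes ob: "orthonormal_basis v"
    and ab: "\<forall>i<CARD('n). a i \<ge> 0 \<and> b i \<ge> 0 \<and> a i + b i = 1 / real CARD('n)"
    and m: "\<forall>A. measure (measure_pmf \<mu>) A =
      (\<Sum>i<CARD('n). a i * indicator A (v i) + b i * indicator A (- v i))"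
  shows "\<mu> \<in> P_fin" and "E_inf \<mu> = 1/2 * (1 - 1 / real CARD('n))"
proof -
  let ?n = "CARD('n)"
  have "v ` {..<?n} \<union> (\<lambda>i. - v i) ` {..<?n} \<subseteq> sphere 0 1"
    using orthonormal_basis_norm[OF ob] by auto
  then show "\<mu> \<in> P_fin"
    using axes_measure_expectation(2)[OF m] unfolding P_fin_def by (auto intro: finite_subset)
  have row: "(\<Sum>l<?n. a l * Lambda_inf x (v l) + b l * Lambda_inf x (- v l)) = 1 - 1 / real ?n"
    if k: "k < ?n" and x: "x \<in> {v k, - v k}" for k x
  proof -
    have "(\<Sum>l<?n. a l * Lambda_inf x (v l) + b l * Lambda_inf x (- v l)) =
        (\<Sum>l<?n. 1 / real ?n - (if l = k then 1 / real ?n else 0))"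
    proof (rule sum.cong[OF refl])
      fix l assume "l \<in> {..<?n}"
      then have l: "l < ?n"
        by simp
      have "Lambda_inf x (v l) = (if l = k then 0 else 1)" "Lambda_inf x (- v l) = (if l = k then 0 else 1)"
        using axis_vectors_inner_eq_0_iff[OF ob k l x] unfolding Lambda_inf_def by auto
      moreover have "a l + b l = 1 / real ?n"
        using ab l by blast
      ultimately show "a l * Lambda_inf x (v l) + b l * Lambda_inf x (- v l) =
          1 / real ?n - (if l = k then 1 / real ?n else 0)"
        by simp
    qed
    also have "\<dots> = 1 - 1 / real ?n"
      using k by (simp add: sum_subtractf)
    finally show ?thesis .
  qed
  have "E_inf \<mu> = 1/2 * (\<Sum>k<?n. a k * (1 - 1 / real ?n) + b k * (1 - 1 / real ?n))"
    unfolding E_inf_def axes_measure_expectation(1)[OF m] using row by simp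
  also have "\<dots> = 1/2 * (\<Sum>k<?n. 1 / real ?n * (1 - 1 / real ?n))"
    using ab by (simp add: distrib_right[symmetric])
  also have "\<dots> = 1/2 * (1 - 1 / real ?n)"
    by simp
  finally show "E_inf \<mu> = 1/2 * (1 - 1 / real CARD('n))" .
qed

lemma ex_P_fin_attaining_frame_bound:
  "\<exists>\<nu> :: (real^'n) pmf. \<nu> \<in> P_fin \<and> E_inf \<nu> = 1/2 * (1 - 1 / real CARD('n))"
proof -
  obtain v :: "nat \<Rightarrow> real^'n" where ob: "orthonormal_basis v"
    using ex_orthonormal_basis by blast
  define \<nu> where "\<nu> = map_pmf v (pmf_of_set {..<CARD('n)})"
  have "is_empirical \<nu> CARD('n) v"
    unfolding \<nu>_def by (rule is_empirical_map_pmf_of_set) (simp add: Suc_leI)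
  then have "\<forall>A. measure (measure_pmf \<nu>) A =
      (\<Sum>i<CARD('n). 1 / real CARD('n) * indicator A (v i) + 0 * indicator A (- v i))"
    unfolding is_empirical_def by (simp add: sum_distrib_left)
  then show ?thesis
    using axes_measure_attains_frame_bound[OF ob, where a = "\<lambda>_. 1 / real CARD('n)" and b = "\<lambda>_. 0"]
    by auto
qed

lemma frame_bound_attained_imp_axes:
  fixes \<mu> :: "(real^'n) pmf"
  assumes P: "\<mu> \<in> P_fin" and E: "1/2 * (1 - 1 / real CARD('n)) \<le> E_inf \<mu>"
  shows "\<exists>v a b. orthonormal_basis v \<and>
    (\<forall>i<CARD('n). a i \<ge> (0::real) \<and> b i \<ge> 0 \<and> a i + b i = 1 / real CARD('n)) \<and>
    (\<forall>A. measure (measure_pmf \<mu>) A = (\<Sum>i<CARD('n). a i * indicator A (v i) + b i * indicator A (- v i)))"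
proof -
  let ?S = "set_pmf \<mu>"
  have fin: "finite ?S" and unit: "\<forall>s\<in>?S. norm s = 1"
    using P unfolding P_fin_def by auto
  have outside: "\<forall>s. s \<notin> ?S \<longrightarrow> pmf \<mu> s = 0"
    by (simp add: set_pmf_iff)
  have total: "(\<Sum>s\<in>?S. pmf \<mu> s) = 1"
    by (rule sum_pmf_eq_1) (use fin in auto)
  have pm: "\<forall>s\<in>?S. \<forall>t\<in>?S. s \<bullet> t \<noteq> 0 \<longrightarrow> s \<in> {t, - t}"
  proof (intro ballI impI)
    fix s t assume s: "s \<in> ?S" and t: "t \<in> ?S" and "s \<bullet> t \<noteq> 0"
    then have "(s \<bullet> t)\<^sup>2 = 1"
      using frame_bound_attained_imp_tight(1)[OF P E] by (force simp: Lambda_inf_def)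
    then show "s \<in> {t, - t}"
      using unit_inner_square_eq_1 unit s t by blast
  qed
  have mass: "\<forall>u\<in>?S. pmf \<mu> u + pmf \<mu> (- u) = 1 / real CARD('n)"
    using axis_mass_of_tight_frame[OF fin unit pm frame_bound_attained_imp_tight(2)[OF P E] outside] by blast
  obtain v where ob: "orthonormal_basis v" and vS: "v ` {..<CARD('n)} \<subseteq> ?S"
    and decomp: "\<forall>f. (\<Sum>s\<in>?S. pmf \<mu> s * f s) =
      (\<Sum>i<CARD('n). pmf \<mu> (v i) * f (v i) + pmf \<mu> (- v i) * f (- v i))"
    using support_on_axes[OF fin unit pm outside total mass] by blast
  have "\<forall>i<CARD('n). pmf \<mu> (v i) + pmf \<mu> (- v i) = 1 / real CARD('n)"
    using mass vS by auto
  moreover have "\<forall>A. measure (measure_pmf \<mu>) A =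
      (\<Sum>i<CARD('n). pmf \<mu> (v i) * indicator A (v i) + pmf \<mu> (- v i) * indicator A (- v i))"
    using measure_pmf_eq_sum_set_pmf[OF fin] decomp by simp
  ultimately show ?thesis
    using ob by (intro exI[of _ v] exI[of _ "\<lambda>i. pmf \<mu> (v i)"] exI[of _ "\<lambda>i. pmf \<mu> (- v i)"]) simp
qed

lemma maximizes_on_P_fin_iff:
  fixes \<mu> :: "(real^'n) pmf"
  shows "maximizes_on E_inf P_fin \<mu> \<longleftrightarrow>
    (\<exists>v a b. orthonormal_basis v \<and>
      (\<forall>i<CARD('n). a i \<ge> (0::real) \<and> b i \<ge> 0 \<and> a i + b i = 1 / real CARD('n)) \<and>
      (\<forall>A. measure (measure_pmf \<mu>) A = (\<Sum>i<CARD('n). a i * indicator A (v i) + b i * indicator A (- v i))))"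
    (is "_ \<longleftrightarrow> ?axes")
proof
  assume max: "maximizes_on E_inf P_fin \<mu>"
  obtain \<nu> :: "(real^'n) pmf" where "\<nu> \<in> P_fin" and "E_inf \<nu> = 1/2 * (1 - 1 / real CARD('n))"
    using ex_P_fin_attaining_frame_bound by blast
  then have "1/2 * (1 - 1 / real CARD('n)) \<le> E_inf \<mu>"
    using max unfolding maximizes_on_def by metis
  then show ?axes
    using frame_bound_attained_imp_axes max unfolding maximizes_on_def by blast
next
  assume ?axes
  then obtain v a b where "orthonormal_basis v"
    and "\<forall>i<CARD('n). a i \<ge> 0 \<and> b i \<ge> 0 \<and> a i + b i = 1 / real CARD('n)"
    and "\<forall>A. measure (measure_pmf \<mu>) A =
      (\<Sum>i<CARD('n). a i * indicator A (v i) + b i * indicator A (- v i))"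
    by blast
  then have "\<mu> \<in> P_fin" and E: "E_inf \<mu> = 1/2 * (1 - 1 / real CARD('n))"
    by (rule axes_measure_attains_frame_bound)+
  moreover have "E_inf \<nu> \<le> E_inf \<mu>" if "\<nu> \<in> P_fin" for \<nu> :: "(real^'n) pmf"
    using E_inf_le_frame_bound[OF that] E by simp
  ultimately show "maximizes_on E_inf P_fin \<mu>"
    unfolding maximizes_on_def by blast
qed

theorem theorem1p4:
  assumes "CARD('n::finite) \<ge> 2"
  shows "(\<forall>N::nat. N \<ge> 1 \<longrightarrow> (\<forall>\<mu> :: (real^'n) pmf.
            maximizes_on E_inf (P_N_eq N) \<mu> \<longleftrightarrow>
            (\<exists>v x. orthonormal_basis v \<and> (\<forall>i<N. x i \<in> sphere 0 1) \<and>
                   is_empirical \<mu> N x \<and>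
                   (\<forall>i<N. x i \<in> {v (i mod CARD('n)), - v (i mod CARD('n))}))))
       \<and> (\<forall>\<mu> :: (real^'n) pmf.
            maximizes_on E_inf P_fin \<mu> \<longleftrightarrow>
            (\<exists>v a b. orthonormal_basis v \<and>
               (\<forall>i<CARD('n). a i \<ge> (0::real) \<and> b i \<ge> 0 \<and> a i + b i = 1 / real CARD('n)) \<and>
               (\<forall>A. measure (measure_pmf \<mu>) A =
                    (\<Sum>i<CARD('n). a i * indicator A (v i) + b i * indicator A (- v i)))))"
  using maximizes_on_P_N_eq_iff maximizes_on_P_fin_iff by blast

end
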